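(* In the setting below, the asymmetric product $T\rtimes_\circ S$ is a simple left brace if and only if $f_z-\mathrm{id}$ is bijective on $V_z$ for every $z\in\mathbb{Z}/(n)$.
   Context: A left brace is a set $B$ with two operations $+,\cdot$ such that $(B,+)$ is an abelian group, $(B,\cdot)$ is a group and $a(b+c)+a=ab+ac$ for all $a,b,c$; $\lambda_a(b)=ab-a$. A left ideal is a subgroup $L$ of $(B,+)$ with $\lambda_b(L)\subseteq L$ for all $b$; an ideal is a left ideal that is a normal subgroup of $(B,\cdot)$; $B$ is simple if $B\neq0$ and its only ideals are $0$ and $B$. For a symmetric bi-additive map $\beta\colon X\times X\to Y$, $\mathrm{O}(X,\beta)=\{g\in\mathrm{Aut}(X,+):\beta(g(x),g(y))=\beta(x,y)\ \forall x,y\}$. Setting: $n>1$, indices $z$ range over $\mathbb{Z}/(n)$. For each $z$, $p_z$ is a prime ($p_z\ne p_{z'}$ for $z\ne z'$), $r_z$ is a positive integer, $m_z$ is an integer with $m_z\ge\max\{r_z,r_{z-1}\}$, $V_z$ is a finite-dimensional $\mathbb{Z}/(p_z)$-vector space with a non-singular symmetric bilinear form $b_z$, and $f_z\in\mathrm{O}(V_z,b_z)$ has order $p_{z-1}$. Let $T_z=V_z^{m_z}$, $S_z=(\mathbb{Z}/(p_z))^{r_z}$ with standard basis $e^{(z)}_1,\dots,e^{(z)}_{r_z}$. Define $b'_z\colon T_z\times T_z\to S_z$ by $b'_z((u_j),(v_j))=\sum_{i=1}^{r_z-1}b_z(u_i,v_i)e^{(z)}_i+\big(\sum_{j=1}^{m_z}b_z(u_j,v_j)\big)e^{(z)}_{r_z}$.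 With $r=r_{z-1}$ and $s=\sum_{i=1}^r\mu_ie^{(z-1)}_i\in S_{z-1}$, define $f^{(z-1,z)}_s(u_1,\dots,u_{m_z})=(f_z^{\mu_1+\mu_r}(u_1),\dots,f_z^{\mu_{r-1}+\mu_r}(u_{r-1}),f_z^{\mu_r}(u_r),\dots,f_z^{\mu_r}(u_{m_z}))$ (all components $f_z^{\mu_1}(u_j)$ if $r=1$). Let $T=T_1\times\cdots\times T_n$, $S=S_1\times\cdots\times S_n$, $b\colon T\times T\to S$, $b(t,t')=(b'_1(t_1,t'_1),\dots,b'_n(t_n,t'_n))$, and $\alpha_{(s_1,\dots,s_n)}(t_1,\dots,t_n)=(f^{(n,1)}_{s_n}(t_1),f^{(1,2)}_{s_1}(t_2),\dots,f^{(n-1,n)}_{s_{n-1}}(t_n))$. The asymmetric product $T\rtimes_\circ S$ is the set $T\times S$ with $(t,s)+(t',s')=(t+t',s+s'+b(t,t'))$ and $(t,s)\cdot(t',s')=(t+\alpha_s(t'),s+s')$; it is a left brace. *)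

theory Defs
  imports "HOL-Algebra.Coset" "HOL-Computational_Algebra.Primes"
begin

definition add_grp :: "'a set \<Rightarrow> ('a \<Rightarrow> 'a \<Rightarrow> 'a) \<Rightarrow> 'a \<Rightarrow> 'a monoid" where
  "add_grp A pl z0 = \<lparr>carrier = A, monoid.mult = pl, one = z0\<rparr>"

definition mul_grp :: "'a set \<Rightarrow> ('a \<Rightarrow> 'a \<Rightarrow> 'a) \<Rightarrow> 'a \<Rightarrow> 'a monoid" where
  "mul_grp A tm e = \<lparr>carrier = A, monoid.mult = tm, one = e\<rparr>"

definition left_brace :: "'a set \<Rightarrow> ('a \<Rightarrow> 'a \<Rightarrow> 'a) \<Rightarrow> 'a \<Rightarrow> ('a \<Rightarrow> 'a \<Rightarrow> 'a) \<Rightarrow> bool" where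
  "left_brace A pl z0 tm \<longleftrightarrow>
     comm_group (add_grp A pl z0) \<and>
     (\<exists>e. group (mul_grp A tm e)) \<and>
     (\<forall>a\<in>A. \<forall>b\<in>A. \<forall>c\<in>A. pl (tm a (pl b c)) a = pl (tm a b) (tm a c))"

definition brace_lambda :: "'a set \<Rightarrow> ('a \<Rightarrow> 'a \<Rightarrow> 'a) \<Rightarrow> 'a \<Rightarrow> ('a \<Rightarrow> 'a \<Rightarrow> 'a) \<Rightarrow> 'a \<Rightarrow> 'a \<Rightarrow> 'a" where
  "brace_lambda A pl z0 tm a b = pl (tm a b) (inv\<^bsub>add_grp A pl z0\<^esub> a)"

definition brace_left_ideal :: "'a set \<Rightarrow> ('a \<Rightarrow> 'a \<Rightarrow> 'a) \<Rightarrow> 'a \<Rightarrow> ('a \<Rightarrow> 'a \<Rightarrow> 'a) \<Rightarrow> 'a set \<Rightarrow> bool" where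
  "brace_left_ideal A pl z0 tm L \<longleftrightarrow>
     subgroup L (add_grp A pl z0) \<and>
     (\<forall>b\<in>A. \<forall>x\<in>L. brace_lambda A pl z0 tm b x \<in> L)"

definition brace_ideal :: "'a set \<Rightarrow> ('a \<Rightarrow> 'a \<Rightarrow> 'a) \<Rightarrow> 'a \<Rightarrow> ('a \<Rightarrow> 'a \<Rightarrow> 'a) \<Rightarrow> 'a set \<Rightarrow> bool" where
  "brace_ideal A pl z0 tm I \<longleftrightarrow>
     brace_left_ideal A pl z0 tm I \<and>
     (\<exists>e. group (mul_grp A tm e) \<and> I \<lhd> mul_grp A tm e)"

definition simple_left_brace :: "'a set \<Rightarrow> ('a \<Rightarrow> 'a \<Rightarrow> 'a) \<Rightarrow> 'a \<Rightarrow> ('a \<Rightarrow> 'a \<Rightarrow> 'a) \<Rightarrow> bool" where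
  "simple_left_brace A pl z0 tm \<longleftrightarrow>
     left_brace A pl z0 tm \<and> A \<noteq> {z0} \<and>
     (\<forall>I. brace_ideal A pl z0 tm I \<longrightarrow> I = {z0} \<or> I = A)"

text \<open>Cyclic predecessor on Z/(n), represented by {0..<n}.\<close>
definition cpred :: "nat \<Rightarrow> nat \<Rightarrow> nat" where
  "cpred n z = (z + n - 1) mod n"

text \<open>(Z/(p))^d, vectors as functions nat => int with entries in {0..<p} and support in {0..<d}.\<close>
definition Zp_space :: "nat \<Rightarrow> nat \<Rightarrow> (nat \<Rightarrow> int) set" where
  "Zp_space p d = {v. (\<forall>i<d. 0 \<le> v i \<and> v i < int p) \<and> (\<forall>i\<ge>d. v i = 0)}"

definition vadd :: "nat \<Rightarrow> (nat \<Rightarrow> int) \<Rightarrow> (nat \<Rightarrow> int) \<Rightarrow> (nat \<Rightarrow> int)" where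
  "vadd p u v = (\<lambda>i. (u i + v i) mod int p)"

definition vsub :: "nat \<Rightarrow> (nat \<Rightarrow> int) \<Rightarrow> (nat \<Rightarrow> int) \<Rightarrow> (nat \<Rightarrow> int)" where
  "vsub p u v = (\<lambda>i. (u i - v i) mod int p)"

text \<open>Non-singular symmetric bilinear form V x V -> Z/(p) (values in {0..<p}).
  Bi-additivity is bilinearity over Z/(p).\<close>
definition nonsing_sym_bilinear :: "nat \<Rightarrow> (nat \<Rightarrow> int) set \<Rightarrow> ((nat \<Rightarrow> int) \<Rightarrow> (nat \<Rightarrow> int) \<Rightarrow> int) \<Rightarrow> bool" where
  "nonsing_sym_bilinear p V b \<longleftrightarrow>
     (\<forall>u\<in>V. \<forall>v\<in>V. 0 \<le> b u v \<and> b u v < int p) \<and>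
     (\<forall>u\<in>V. \<forall>v\<in>V. b u v = b v u) \<and>
     (\<forall>u\<in>V. \<forall>v\<in>V. \<forall>w\<in>V. b (vadd p u v) w = (b u w + b v w) mod int p) \<and>
     (\<forall>u\<in>V. (\<forall>v\<in>V. b u v = 0) \<longrightarrow> u = (\<lambda>_. 0))"

definition in_orth :: "nat \<Rightarrow> (nat \<Rightarrow> int) set \<Rightarrow> ((nat \<Rightarrow> int) \<Rightarrow> (nat \<Rightarrow> int) \<Rightarrow> int)
    \<Rightarrow> ((nat \<Rightarrow> int) \<Rightarrow> (nat \<Rightarrow> int)) \<Rightarrow> bool" where
  "in_orth p V b f \<longleftrightarrow>
     bij_betw f V V \<and>
     (\<forall>u\<in>V. \<forall>v\<in>V. f (vadd p u v) = vadd p (f u) (f v)) \<and>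
     (\<forall>u\<in>V. \<forall>v\<in>V. b (f u) (f v) = b u v)"

definition perm_order :: "'v set \<Rightarrow> ('v \<Rightarrow> 'v) \<Rightarrow> nat \<Rightarrow> bool" where
  "perm_order V f k \<longleftrightarrow>
     0 < k \<and> (\<forall>v\<in>V. (f ^^ k) v = v) \<and> (\<forall>j. 0 < j \<and> j < k \<longrightarrow> (\<exists>v\<in>V. (f ^^ j) v \<noteq> v))"

text \<open>T_z = V_z^m (components indexed 0..<m, i.e. paper index j+1).\<close>
definition Tz :: "nat \<Rightarrow> nat \<Rightarrow> nat \<Rightarrow> (nat \<Rightarrow> nat \<Rightarrow> int) set" where
  "Tz p d m = {t. (\<forall>j<m. t j \<in> Zp_space p d) \<and> (\<forall>j\<ge>m. t j = (\<lambda>_. 0))}"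

text \<open>b'_z; component i (0-based) corresponds to e_(i+1).\<close>
definition bprime :: "nat \<Rightarrow> nat \<Rightarrow> nat \<Rightarrow> ((nat \<Rightarrow> int) \<Rightarrow> (nat \<Rightarrow> int) \<Rightarrow> int)
    \<Rightarrow> (nat \<Rightarrow> nat \<Rightarrow> int) \<Rightarrow> (nat \<Rightarrow> nat \<Rightarrow> int) \<Rightarrow> (nat \<Rightarrow> int)" where
  "bprime p r m bz u v = (\<lambda>i.
     if i + 1 < r then bz (u i) (v i)
     else if i + 1 = r then (\<Sum>j<m. bz (u j) (v j)) mod int p
     else 0)"

text \<open>f^(z-1,z)_s with r = r_(z-1); s i (0-based) is mu_(i+1).\<close>
definition fshift :: "nat \<Rightarrow> nat \<Rightarrow> ((nat \<Rightarrow> int) \<Rightarrow> (nat \<Rightarrow> int)) \<Rightarrow> (nat \<Rightarrow> int)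
    \<Rightarrow> (nat \<Rightarrow> nat \<Rightarrow> int) \<Rightarrow> (nat \<Rightarrow> nat \<Rightarrow> int)" where
  "fshift r m fz s u = (\<lambda>j.
     if j < m then
       (if j + 1 < r then (fz ^^ nat (s j + s (r - 1))) (u j)
        else (fz ^^ nat (s (r - 1))) (u j))
     else (\<lambda>_. 0))"

definition TT :: "nat \<Rightarrow> (nat \<Rightarrow> nat) \<Rightarrow> (nat \<Rightarrow> nat) \<Rightarrow> (nat \<Rightarrow> nat) \<Rightarrow> (nat \<Rightarrow> nat \<Rightarrow> nat \<Rightarrow> int) set" where
  "TT n p d m = {t. (\<forall>z<n. t z \<in> Tz (p z) (d z) (m z)) \<and> (\<forall>z\<ge>n. t z = (\<lambda>_ _. 0))}"

definition SS :: "nat \<Rightarrow> (nat \<Rightarrow> nat) \<Rightarrow> (nat \<Rightarrow> nat) \<Rightarrow> (nat \<Rightarrow> nat \<Rightarrow> int) set" where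
  "SS n p r = {s. (\<forall>z<n. s z \<in> Zp_space (p z) (r z)) \<and> (\<forall>z\<ge>n. s z = (\<lambda>_. 0))}"

definition tadd :: "nat \<Rightarrow> (nat \<Rightarrow> nat) \<Rightarrow> (nat \<Rightarrow> nat \<Rightarrow> nat \<Rightarrow> int) \<Rightarrow> (nat \<Rightarrow> nat \<Rightarrow> nat \<Rightarrow> int) \<Rightarrow> (nat \<Rightarrow> nat \<Rightarrow> nat \<Rightarrow> int)" where
  "tadd n p t t' = (\<lambda>z j i. if z < n then (t z j i + t' z j i) mod int (p z) else 0)"

definition sadd :: "nat \<Rightarrow> (nat \<Rightarrow> nat) \<Rightarrow> (nat \<Rightarrow> nat \<Rightarrow> int) \<Rightarrow> (nat \<Rightarrow> nat \<Rightarrow> int) \<Rightarrow> (nat \<Rightarrow> nat \<Rightarrow> int)" where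
  "sadd n p s s' = (\<lambda>z i. if z < n then (s z i + s' z i) mod int (p z) else 0)"

definition bT :: "nat \<Rightarrow> (nat \<Rightarrow> nat) \<Rightarrow> (nat \<Rightarrow> nat) \<Rightarrow> (nat \<Rightarrow> nat)
    \<Rightarrow> (nat \<Rightarrow> (nat \<Rightarrow> int) \<Rightarrow> (nat \<Rightarrow> int) \<Rightarrow> int)
    \<Rightarrow> (nat \<Rightarrow> nat \<Rightarrow> nat \<Rightarrow> int) \<Rightarrow> (nat \<Rightarrow> nat \<Rightarrow> nat \<Rightarrow> int) \<Rightarrow> (nat \<Rightarrow> nat \<Rightarrow> int)" where
  "bT n p r m b t t' = (\<lambda>z. if z < n then bprime (p z) (r z) (m z) (b z) (t z) (t' z) else (\<lambda>_. 0))"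

definition alpha :: "nat \<Rightarrow> (nat \<Rightarrow> nat) \<Rightarrow> (nat \<Rightarrow> nat)
    \<Rightarrow> (nat \<Rightarrow> (nat \<Rightarrow> int) \<Rightarrow> (nat \<Rightarrow> int))
    \<Rightarrow> (nat \<Rightarrow> nat \<Rightarrow> int) \<Rightarrow> (nat \<Rightarrow> nat \<Rightarrow> nat \<Rightarrow> int) \<Rightarrow> (nat \<Rightarrow> nat \<Rightarrow> nat \<Rightarrow> int)" where
  "alpha n r m f s t = (\<lambda>z. if z < n then fshift (r (cpred n z)) (m z) (f z) (s (cpred n z)) (t z)
                           else (\<lambda>_ _. 0))"

type_synonym asym_elem = "(nat \<Rightarrow> nat \<Rightarrow> nat \<Rightarrow> int) \<times> (nat \<Rightarrow> nat \<Rightarrow> int)"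

definition asym_carrier :: "nat \<Rightarrow> (nat \<Rightarrow> nat) \<Rightarrow> (nat \<Rightarrow> nat) \<Rightarrow> (nat \<Rightarrow> nat) \<Rightarrow> (nat \<Rightarrow> nat) \<Rightarrow> asym_elem set" where
  "asym_carrier n p d m r = TT n p d m \<times> SS n p r"

definition asym_zero :: asym_elem where
  "asym_zero = ((\<lambda>_ _ _. 0), (\<lambda>_ _. 0))"

definition asym_add :: "nat \<Rightarrow> (nat \<Rightarrow> nat) \<Rightarrow> (nat \<Rightarrow> nat) \<Rightarrow> (nat \<Rightarrow> nat)
    \<Rightarrow> (nat \<Rightarrow> (nat \<Rightarrow> int) \<Rightarrow> (nat \<Rightarrow> int) \<Rightarrow> int) \<Rightarrow> asym_elem \<Rightarrow> asym_elem \<Rightarrow> asym_elem" where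
  "asym_add n p r m b x y =
     (tadd n p (fst x) (fst y), sadd n p (sadd n p (snd x) (snd y)) (bT n p r m b (fst x) (fst y)))"

definition asym_mul :: "nat \<Rightarrow> (nat \<Rightarrow> nat) \<Rightarrow> (nat \<Rightarrow> nat) \<Rightarrow> (nat \<Rightarrow> nat)
    \<Rightarrow> (nat \<Rightarrow> (nat \<Rightarrow> int) \<Rightarrow> (nat \<Rightarrow> int)) \<Rightarrow> asym_elem \<Rightarrow> asym_elem \<Rightarrow> asym_elem" where
  "asym_mul n p r m f x y =
     (tadd n p (fst x) (alpha n r m f (snd x) (fst y)), sadd n p (snd x) (snd y))"

end

theory Submission
  imports Defs
begin

text \<open>Two facts about an ideal \<open>I\<close> of \<open>T \<rtimes>\<^sub>\<circ> S\<close> drive the proof. Applying \<open>\<lambda>\<close> of \<open>(t, 0)\<close>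
  to \<open>(x, y) \<in> I\<close> shows \<open>(0, b(x, t)) \<in> I\<close> for every \<open>t\<close>, and conjugating \<open>(u, 0)\<close> by
  \<open>(0, s) \<in> I\<close> shows \<open>(-u + \<alpha>\<^sub>s(u), 0) \<in> I\<close>. If every \<open>f\<^sub>z - id\<close> is bijective, the second fact turns
  a nonzero top coordinate of \<open>s\<close> in \<open>S\<^sub>z\<^sub>-\<^sub>1\<close> into all of \<open>T\<^sub>z\<close>, and the first, by
  non-singularity of \<open>b\<^sub>z\<close>, into a nonzero top coordinate in \<open>S\<^sub>z\<close>. A nonzero ideal thus meets
  the top coordinate at one index, hence around the whole cycle \<open>\<int>/(n)\<close>, and then contains
  everything. Conversely, if some \<open>f\<^sub>z - id\<close> is not surjective, the elements whose
  \<open>T\<^sub>z\<close>-components lie in its image form a proper nonzero ideal.\<close>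

lemma double_mod_eq_self_imp_zero:
  assumes "0 \<le> x" "x < P" "x = (x + x) mod P"
  shows "x = (0::int)"
proof (cases "x + x < P")
  case False
  have "(x + x) mod P = (x + x - P) mod P" by (simp add: mod_diff_right_eq[symmetric])
  also have "\<dots> = x + x - P" using assms False by (intro mod_pos_pos_trivial) auto
  finally show ?thesis using assms by simp
qed (use assms in simp)

lemma funpow_mod_period:
  assumes "(g ^^ q) v = v"
  shows "(g ^^ k) v = (g ^^ (k mod q)) v"
proof -
  have period: "(g ^^ (q * c)) v = v" for c
    by (induction c) (simp_all add: funpow_add assms)
  have "(g ^^ k) v = (g ^^ (k mod q)) ((g ^^ (q * (k div q))) v)"
    by (metis funpow_add o_apply mod_div_mult_eq mult.commute)
  then show ?thesis by (simp add: period)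
qed

lemma prime_mod_inverse:
  assumes "prime (P::nat)" and "c mod int P \<noteq> 0"
  shows "\<exists>k::nat. (int k * c) mod int P = 1"
proof -
  have "\<not> int P dvd c" using assms(2) by (simp add: dvd_eq_mod_eq_0)
  moreover have "prime (int P)" using assms(1) by simp
  ultimately have "coprime (int P) c" using prime_imp_coprime by blast
  then obtain u v where uv: "u * c + v * int P = 1"
    using bezout_int[of c "int P"] by (auto simp: coprime_iff_gcd_eq_1 gcd.commute)
  have P1: "1 < int P" using assms(1) prime_gt_1_nat by simp
  have "(u * c) mod int P = (u * c + v * int P) mod int P" by simp
  then have "(u * c) mod int P = 1" using uv P1 by simp
  moreover have "(int (nat (u mod int P)) * c) mod int P = (u * c) mod int P"
    using P1 by (simp add: mod_mult_left_eq)
  ultimately show ?thesis by metis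
qed

lemma (in group) normal_conj_mem:
  assumes "N \<lhd> G" "g \<in> carrier G" "h \<in> N" "h' \<in> carrier G" "g \<otimes> h' = h \<otimes> g"
  shows "h' \<in> N"
proof -
  have hc: "h \<in> carrier G" using assms(1,3) normal_imp_subgroup subgroup.subset by blast
  have "h' = inv g \<otimes> h \<otimes> inv (inv g)"
    using assms(2,4,5) hc by (metis inv_closed inv_inv l_inv l_one m_assoc r_inv r_one)
  then show ?thesis using assms(1-3) normal_inv_iff by (metis inv_closed)
qed

lemma (in group) subgroup_mult_cancel_right:
  assumes "subgroup H G" "u \<in> H" "v \<in> carrier G" "v \<otimes> u \<in> H"
  shows "v \<in> H"
proof -
  have "u \<in> carrier G" using assms(1,2) subgroup.subset by blast
  then have "v = (v \<otimes> u) \<otimes> inv u" using assms(3) by (simp add: m_assoc)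
  then show ?thesis using assms subgroup.m_closed subgroup.m_inv_closed by metis
qed

lemma Zp_space_iff:
  assumes "0 < p"
  shows "v \<in> Zp_space p d \<longleftrightarrow> (\<forall>i. v i mod int p = v i) \<and> (\<forall>i\<ge>d. v i = 0)"
proof
  assume h: "v \<in> Zp_space p d"
  show "(\<forall>i. v i mod int p = v i) \<and> (\<forall>i\<ge>d. v i = 0)"
  proof (intro conjI allI impI)
    fix i show "v i mod int p = v i"
      using h assms by (cases "i < d") (auto simp: Zp_space_def)
  qed (use h in \<open>auto simp: Zp_space_def\<close>)
next
  assume h: "(\<forall>i. v i mod int p = v i) \<and> (\<forall>i\<ge>d. v i = 0)"
  have "0 \<le> v i \<and> v i < int p" for i
    using h assms by (metis pos_mod_bound pos_mod_sign of_nat_0_less_iff)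
  then show "v \<in> Zp_space p d" using h by (auto simp: Zp_space_def)
qed

lemma Zp_space_mod: "0 < p \<Longrightarrow> v \<in> Zp_space p d \<Longrightarrow> v i mod int p = v i"
  using Zp_space_iff by blast

lemma Zp_space_outside: "v \<in> Zp_space p d \<Longrightarrow> d \<le> i \<Longrightarrow> v i = 0"
  by (auto simp: Zp_space_def)

lemma zero_in_Zp_space: "0 < p \<Longrightarrow> (\<lambda>_. 0) \<in> Zp_space p d"
  by (auto simp: Zp_space_def)

lemma vadd_closed: "0 < p \<Longrightarrow> u \<in> Zp_space p d \<Longrightarrow> v \<in> Zp_space p d \<Longrightarrow> vadd p u v \<in> Zp_space p d"
  by (auto simp: Zp_space_iff vadd_def Zp_space_outside)

lemma vsub_closed: "0 < p \<Longrightarrow> u \<in> Zp_space p d \<Longrightarrow> v \<in> Zp_space p d \<Longrightarrow> vsub p u v \<in> Zp_space p d"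
  by (auto simp: Zp_space_iff vsub_def Zp_space_outside)

lemma vadd_vsub_cancel: "0 < p \<Longrightarrow> u \<in> Zp_space p d \<Longrightarrow> w \<in> Zp_space p d \<Longrightarrow> vadd p (vsub p w u) u = w"
  by (rule ext) (simp add: vadd_def vsub_def mod_simps Zp_space_mod)

lemma vsub_vadd_cancel: "0 < p \<Longrightarrow> u \<in> Zp_space p d \<Longrightarrow> w \<in> Zp_space p d \<Longrightarrow> vsub p (vadd p w u) u = w"
  by (rule ext) (simp add: vadd_def vsub_def mod_simps Zp_space_mod)

lemma vadd_eq_iff:
  assumes "0 < p" "x \<in> Zp_space p d" "u \<in> Zp_space p d" "w \<in> Zp_space p d"
  shows "vadd p x u = w \<longleftrightarrow> x = vsub p w u"
  using assms vadd_vsub_cancel vsub_vadd_cancel by metis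

lemma vsub_self: "vsub p u u = (\<lambda>_. 0)"
  by (simp add: vsub_def)

lemma finite_Zp_space: "finite (Zp_space p d)"
proof -
  let ?extend = "\<lambda>g i. if i < d then g i else 0"
  have "Zp_space p d \<subseteq> ?extend ` (PiE {..<d} (\<lambda>_. {0..<int p}))"
  proof
    fix v assume v: "v \<in> Zp_space p d"
    show "v \<in> ?extend ` (PiE {..<d} (\<lambda>_. {0..<int p}))"
    proof
      show "v = ?extend (restrict v {..<d})"
        using v by (auto simp: Zp_space_def)
      show "restrict v {..<d} \<in> PiE {..<d} (\<lambda>_. {0..<int p})"
        using v by (auto simp: Zp_space_def)
    qed
  qed
  moreover have "finite (PiE {..<d} (\<lambda>_. {0..<int p}))"
    by (rule finite_PiE) auto
  ultimately show ?thesis using finite_subset by blast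
qed

locale Zp_isometry =
  fixes p d :: nat
    and B :: "(nat \<Rightarrow> int) \<Rightarrow> (nat \<Rightarrow> int) \<Rightarrow> int"
    and g :: "(nat \<Rightarrow> int) \<Rightarrow> (nat \<Rightarrow> int)"
  assumes p_pos: "0 < p"
    and form: "nonsing_sym_bilinear p (Zp_space p d) B"
    and isometry: "in_orth p (Zp_space p d) B g"
begin

abbreviation "V \<equiv> Zp_space p d"

lemma form_bounds: "u \<in> V \<Longrightarrow> v \<in> V \<Longrightarrow> 0 \<le> B u v \<and> B u v < int p"
  using form by (simp add: nonsing_sym_bilinear_def)

lemma form_mod: "u \<in> V \<Longrightarrow> v \<in> V \<Longrightarrow> B u v mod int p = B u v"
  using form_bounds by (simp add: mod_pos_pos_trivial)

lemma form_sym: "u \<in> V \<Longrightarrow> v \<in> V \<Longrightarrow> B u v = B v u"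
  using form by (simp add: nonsing_sym_bilinear_def)

lemma form_add_left:
  "u \<in> V \<Longrightarrow> v \<in> V \<Longrightarrow> w \<in> V \<Longrightarrow> B (vadd p u v) w = (B u w + B v w) mod int p"
  using form by (simp add: nonsing_sym_bilinear_def)

lemma form_nondegenerate: "u \<in> V \<Longrightarrow> u \<noteq> (\<lambda>_. 0) \<Longrightarrow> \<exists>v\<in>V. B u v \<noteq> 0"
  using form unfolding nonsing_sym_bilinear_def by blast

lemma form_zero_left:
  assumes "v \<in> V"
  shows "B (\<lambda>_. 0) v = 0"
proof -
  have z: "(\<lambda>_. 0) \<in> V" using zero_in_Zp_space p_pos by blast
  have "vadd p (\<lambda>_. 0) (\<lambda>_. 0) = (\<lambda>_. 0)" by (simp add: vadd_def)
  then have "B (\<lambda>_. 0) v = (B (\<lambda>_. 0) v + B (\<lambda>_. 0) v) mod int p"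
    using form_add_left[OF z z assms] by simp
  then show ?thesis using form_bounds[OF z assms] double_mod_eq_self_imp_zero by blast
qed

lemma form_zero_right: "v \<in> V \<Longrightarrow> B v (\<lambda>_. 0) = 0"
  using form_zero_left form_sym zero_in_Zp_space p_pos by metis

lemma closed: "v \<in> V \<Longrightarrow> g v \<in> V"
  using isometry bij_betwE by (auto simp: in_orth_def)

lemma additive: "u \<in> V \<Longrightarrow> v \<in> V \<Longrightarrow> g (vadd p u v) = vadd p (g u) (g v)"
  using isometry by (simp add: in_orth_def)

lemma preserves_form: "u \<in> V \<Longrightarrow> v \<in> V \<Longrightarrow> B (g u) (g v) = B u v"
  using isometry by (simp add: in_orth_def)

lemma subtractive:
  assumes "u \<in> V" "v \<in> V"
  shows "g (vsub p u v) = vsub p (g u) (g v)"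
proof -
  have "vadd p (g (vsub p u v)) (g v) = g u"
    using additive[OF vsub_closed[OF p_pos assms] assms(2)] vadd_vsub_cancel[OF p_pos assms(2,1)] by simp
  then show ?thesis
    using vadd_eq_iff[OF p_pos closed[OF vsub_closed[OF p_pos assms]] closed closed] assms by blast
qed

lemma zero: "g (\<lambda>_. 0) = (\<lambda>_. 0)"
  using subtractive[OF zero_in_Zp_space zero_in_Zp_space, OF p_pos p_pos] by (simp add: vsub_self)

lemma pow_closed: "v \<in> V \<Longrightarrow> (g ^^ k) v \<in> V"
  by (induction k) (auto intro: closed)

lemma pow_additive: "u \<in> V \<Longrightarrow> v \<in> V \<Longrightarrow> (g ^^ k) (vadd p u v) = vadd p ((g ^^ k) u) ((g ^^ k) v)"
  by (induction k) (auto simp: additive pow_closed)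

lemma pow_preserves_form: "u \<in> V \<Longrightarrow> v \<in> V \<Longrightarrow> B ((g ^^ k) u) ((g ^^ k) v) = B u v"
  by (induction k) (auto simp: preserves_form pow_closed)

lemma pow_zero: "(g ^^ k) (\<lambda>_. 0) = (\<lambda>_. 0)"
  by (induction k) (auto simp: zero)

abbreviation diff_image :: "(nat \<Rightarrow> int) set" where
  "diff_image \<equiv> (\<lambda>v. vsub p (g v) v) ` V"

lemma diff_image_subset: "diff_image \<subseteq> V"
  using vsub_closed[OF p_pos] closed by blast

lemma diff_image_zero: "(\<lambda>_. 0) \<in> diff_image"
  using zero zero_in_Zp_space[OF p_pos] by (force simp: vsub_def)

lemma diff_image_add:
  assumes "a \<in> diff_image" "c \<in> diff_image"
  shows "vadd p a c \<in> diff_image"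
proof -
  obtain u v where uv: "u \<in> V" "v \<in> V" "a = vsub p (g u) u" "c = vsub p (g v) v"
    using assms by blast
  have "vsub p (vadd p (g u) (g v)) (vadd p u v) = vadd p a c"
    unfolding uv(3,4) by (intro ext) (simp add: vadd_def vsub_def mod_simps, simp add: algebra_simps)
  then have "vsub p (g (vadd p u v)) (vadd p u v) = vadd p a c"
    using additive[OF uv(1,2)] by simp
  then show ?thesis using vadd_closed[OF p_pos uv(1,2)] by force
qed

lemma diff_image_neg:
  assumes "a \<in> diff_image"
  shows "vsub p (\<lambda>_. 0) a \<in> diff_image"
proof -
  obtain u where u: "u \<in> V" "a = vsub p (g u) u" using assms by blast
  have "g (vsub p (\<lambda>_. 0) u) = vsub p (\<lambda>_. 0) (g u)"
    using subtractive[OF zero_in_Zp_space[OF p_pos] u(1)] zero by simp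
  then have "vsub p (g (vsub p (\<lambda>_. 0) u)) (vsub p (\<lambda>_. 0) u) = vsub p (\<lambda>_. 0) a"
    using u by (intro ext) (simp add: vsub_def mod_simps algebra_simps)
  then show ?thesis using vsub_closed[OF p_pos zero_in_Zp_space[OF p_pos] u(1)] by force
qed

lemma diff_image_pow: "a \<in> diff_image \<Longrightarrow> (g ^^ k) a \<in> diff_image"
proof (induction k)
  case (Suc k)
  then obtain u where "u \<in> V" "(g ^^ k) a = vsub p (g u) u" by auto
  then have "(g ^^ Suc k) a = vsub p (g (g u)) (g u)" by (simp add: subtractive closed)
  then show ?case using \<open>u \<in> V\<close> closed by blast
qed simp

lemma diff_image_pow_diff:
  assumes "v \<in> V"
  shows "vsub p v ((g ^^ k) v) \<in> diff_image"
proof (induction k)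
  case 0
  then show ?case using diff_image_zero by (simp add: vsub_self)
next
  case (Suc k)
  let ?w = "(g ^^ k) v"
  have "vsub p ?w (g ?w) = vsub p (\<lambda>_. 0) (vsub p (g ?w) ?w)"
    by (intro ext) (simp add: vsub_def mod_simps)
  then have "vsub p ?w (g ?w) \<in> diff_image"
    using diff_image_neg pow_closed[OF assms] by auto
  moreover have "vsub p v ((g ^^ Suc k) v) = vadd p (vsub p v ?w) (vsub p ?w (g ?w))"
    by (intro ext) (simp add: vsub_def vadd_def mod_simps)
  ultimately show ?case using diff_image_add[OF Suc] by simp
qed

end

section \<open>The asymmetric product\<close>

locale asym_product =
  fixes n :: nat
    and p r m d :: "nat \<Rightarrow> nat"
    and b :: "nat \<Rightarrow> (nat \<Rightarrow> int) \<Rightarrow> (nat \<Rightarrow> int) \<Rightarrow> int"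
    and f :: "nat \<Rightarrow> (nat \<Rightarrow> int) \<Rightarrow> (nat \<Rightarrow> int)"
  assumes n_pos: "0 < n"
    and p_prime: "\<forall>z<n. prime (p z)"
    and r_pos: "\<forall>z<n. 0 < r z"
    and m_ge: "\<forall>z<n. r z \<le> m z \<and> r (cpred n z) \<le> m z"
    and b_form: "\<forall>z<n. nonsing_sym_bilinear (p z) (Zp_space (p z) (d z)) (b z)"
    and f_orth: "\<forall>z<n. in_orth (p z) (Zp_space (p z) (d z)) (b z) (f z)"
    and f_order: "\<forall>z<n. perm_order (Zp_space (p z) (d z)) (f z) (p (cpred n z))"
begin

abbreviation V where "V z \<equiv> Zp_space (p z) (d z)"

lemma cpred_less: "cpred n z < n"
  using n_pos by (simp add: cpred_def)

lemma cpred_Suc_mod: "cpred n (Suc a mod n) = a mod n"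
proof -
  have "cpred n (Suc a mod n) = (Suc a mod n + (n - 1)) mod n"
    using n_pos by (simp add: cpred_def)
  also have "\<dots> = (Suc a + (n - 1)) mod n" by (simp add: mod_add_left_eq)
  also have "Suc a + (n - 1) = a + n" using n_pos by simp
  finally show ?thesis by simp
qed

lemma p_gt_1: "z < n \<Longrightarrow> 1 < p z"
  using p_prime prime_gt_1_nat by blast

lemma p_pos: "z < n \<Longrightarrow> 0 < p z"
  using p_gt_1 by fastforce

lemma isometry_at: "z < n \<Longrightarrow> Zp_isometry (p z) (d z) (b z) (f z)"
  using p_pos b_form f_orth by (simp add: Zp_isometry_def)

lemmas b_bounds = Zp_isometry.form_bounds[OF isometry_at]
  and b_mod = Zp_isometry.form_mod[OF isometry_at]
  and b_sym = Zp_isometry.form_sym[OF isometry_at]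
  and b_add_left = Zp_isometry.form_add_left[OF isometry_at]
  and b_zero_left = Zp_isometry.form_zero_left[OF isometry_at]
  and b_zero_right = Zp_isometry.form_zero_right[OF isometry_at]
  and b_nondegenerate = Zp_isometry.form_nondegenerate[OF isometry_at]
  and f_pow_closed = Zp_isometry.pow_closed[OF isometry_at]
  and f_pow_additive = Zp_isometry.pow_additive[OF isometry_at]
  and f_pow_preserves_form = Zp_isometry.pow_preserves_form[OF isometry_at]
  and f_pow_zero = Zp_isometry.pow_zero[OF isometry_at]

lemma f_pow_cong:
  assumes "z < n" "v \<in> V z" "k mod p (cpred n z) = k' mod p (cpred n z)"
  shows "(f z ^^ k) v = (f z ^^ k') v"
proof -
  have "(f z ^^ p (cpred n z)) v = v" using f_order assms(1,2) by (simp add: perm_order_def)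
  from funpow_mod_period[OF this] show ?thesis by (metis assms(3))
qed

lemma V_nontrivial:
  assumes "z < n"
  shows "\<exists>w\<in>V z. w \<noteq> (\<lambda>_. 0)"
proof -
  have "perm_order (V z) (f z) (p (cpred n z))" using f_order assms by blast
  moreover have "1 < p (cpred n z)" using p_gt_1 cpred_less by blast
  ultimately obtain v where v: "v \<in> V z" "(f z ^^ 1) v \<noteq> v" unfolding perm_order_def by blast
  have "f z (\<lambda>_. 0) = (\<lambda>_. 0)" using Zp_isometry.zero[OF isometry_at[OF assms]] .
  then have "v \<noteq> (\<lambda>_. 0)" using v(2) by auto
  then show ?thesis using v(1) by blast
qed

abbreviation "T \<equiv> TT n p d m"
abbreviation "S \<equiv> SS n p r"

lemma T_iff:
  "t \<in> T \<longleftrightarrow> (\<forall>z<n. \<forall>j<m z. t z j \<in> V z) \<and> (\<forall>z j. \<not> (z < n \<and> j < m z) \<longrightarrow> t z j = (\<lambda>_. 0))"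
  unfolding TT_def Tz_def by (auto; metis not_le)

lemma T_component: "t \<in> T \<Longrightarrow> z < n \<Longrightarrow> j < m z \<Longrightarrow> t z j \<in> V z"
  by (simp add: T_iff)

lemma T_outside: "t \<in> T \<Longrightarrow> \<not> (z < n \<and> j < m z) \<Longrightarrow> t z j = (\<lambda>_. 0)"
  by (simp add: T_iff)

lemma T_component_in_V: "t \<in> T \<Longrightarrow> z < n \<Longrightarrow> t z j \<in> V z"
  using T_component T_outside zero_in_Zp_space p_pos by metis

lemma T_mod: "t \<in> T \<Longrightarrow> z < n \<Longrightarrow> t z j i mod int (p z) = t z j i"
  using T_component_in_V Zp_space_mod p_pos by blast

lemma T_eqI: "t \<in> T \<Longrightarrow> t' \<in> T \<Longrightarrow> (\<And>z j. z < n \<Longrightarrow> j < m z \<Longrightarrow> t z j = t' z j) \<Longrightarrow> t = t'"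
  by (intro ext) (metis T_outside)

lemma S_iff: "s \<in> S \<longleftrightarrow> (\<forall>z<n. s z \<in> Zp_space (p z) (r z)) \<and> (\<forall>z\<ge>n. s z = (\<lambda>_. 0))"
  unfolding SS_def by auto

lemma S_component: "s \<in> S \<Longrightarrow> z < n \<Longrightarrow> s z \<in> Zp_space (p z) (r z)"
  by (simp add: S_iff)

lemma S_outside: "s \<in> S \<Longrightarrow> \<not> z < n \<Longrightarrow> s z = (\<lambda>_. 0)"
  by (simp add: S_iff)

lemma S_mod: "s \<in> S \<Longrightarrow> z < n \<Longrightarrow> s z i mod int (p z) = s z i"
  using S_component Zp_space_mod p_pos by blast

lemma S_bounds: "s \<in> S \<Longrightarrow> z < n \<Longrightarrow> 0 \<le> s z i \<and> s z i < int (p z)"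
  by (metis S_mod p_pos pos_mod_sign pos_mod_bound of_nat_0_less_iff)

lemma zero_in_T: "(\<lambda>_ _ _. 0) \<in> T"
  by (simp add: T_iff zero_in_Zp_space p_pos)

lemma zero_in_S: "(\<lambda>_ _. 0) \<in> S"
  by (simp add: S_iff zero_in_Zp_space p_pos)

lemma tadd_apply: "tadd n p t t' z j = (if z < n then vadd (p z) (t z j) (t' z j) else (\<lambda>_. 0))"
  by (simp add: tadd_def vadd_def)

lemma tadd_closed:
  assumes "t \<in> T" "t' \<in> T"
  shows "tadd n p t t' \<in> T"
  unfolding T_iff
proof (intro conjI allI impI)
  fix z j assume "z < n" "j < m z"
  then show "tadd n p t t' z j \<in> V z" using assms by (simp add: tadd_apply vadd_closed p_pos T_component)
next
  fix z j assume "\<not> (z < n \<and> j < m z)"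
  then show "tadd n p t t' z j = (\<lambda>_. 0)" using assms T_outside by (auto simp: tadd_apply vadd_def)
qed

lemma sadd_closed:
  assumes "s \<in> S" "s' \<in> S"
  shows "sadd n p s s' \<in> S"
proof -
  have "sadd n p s s' z = vadd (p z) (s z) (s' z)" if "z < n" for z
    using that by (simp add: sadd_def vadd_def)
  then show ?thesis using assms by (auto simp: S_iff vadd_closed p_pos sadd_def)
qed

lemma tadd_assoc: "tadd n p (tadd n p t t') t'' = tadd n p t (tadd n p t' t'')"
  by (intro ext) (simp add: tadd_def mod_simps ac_simps)

lemma tadd_comm: "tadd n p t t' = tadd n p t' t"
  by (intro ext) (simp add: tadd_def ac_simps)

lemma tadd_zero_left: "t \<in> T \<Longrightarrow> tadd n p (\<lambda>_ _ _. 0) t = t"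
  by (intro ext) (auto simp: tadd_def T_mod T_outside)

lemma sadd_assoc: "sadd n p (sadd n p s s') s'' = sadd n p s (sadd n p s' s'')"
  by (intro ext) (simp add: sadd_def mod_simps ac_simps)

lemma sadd_comm: "sadd n p s s' = sadd n p s' s"
  by (intro ext) (simp add: sadd_def ac_simps)

lemma sadd_zero_left: "s \<in> S \<Longrightarrow> sadd n p (\<lambda>_ _. 0) s = s"
  by (intro ext) (auto simp: sadd_def S_mod S_outside)

lemma sadd_zero_right: "s \<in> S \<Longrightarrow> sadd n p s (\<lambda>_ _. 0) = s"
  by (intro ext) (auto simp: sadd_def S_mod S_outside)

definition tneg :: "(nat \<Rightarrow> nat \<Rightarrow> nat \<Rightarrow> int) \<Rightarrow> (nat \<Rightarrow> nat \<Rightarrow> nat \<Rightarrow> int)" where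
  "tneg t = (\<lambda>z j i. if z < n then (- t z j i) mod int (p z) else 0)"

definition sneg :: "(nat \<Rightarrow> nat \<Rightarrow> int) \<Rightarrow> (nat \<Rightarrow> nat \<Rightarrow> int)" where
  "sneg s = (\<lambda>z i. if z < n then (- s z i) mod int (p z) else 0)"

lemma tneg_apply: "tneg t z j = (if z < n then vsub (p z) (\<lambda>_. 0) (t z j) else (\<lambda>_. 0))"
  by (simp add: tneg_def vsub_def)

lemma tneg_closed:
  assumes "t \<in> T"
  shows "tneg t \<in> T"
  unfolding T_iff
proof (intro conjI allI impI)
  fix z j assume "z < n" "j < m z"
  then show "tneg t z j \<in> V z" using assms by (simp add: tneg_apply vsub_closed p_pos T_component zero_in_Zp_space)
next
  fix z j assume "\<not> (z < n \<and> j < m z)"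
  then show "tneg t z j = (\<lambda>_. 0)" using assms T_outside by (auto simp: tneg_def)
qed

lemma sneg_closed:
  assumes "s \<in> S"
  shows "sneg s \<in> S"
proof -
  have "sneg s z = vsub (p z) (\<lambda>_. 0) (s z)" if "z < n" for z
    using that by (simp add: sneg_def vsub_def)
  then show ?thesis using assms by (auto simp: S_iff vsub_closed p_pos zero_in_Zp_space sneg_def)
qed

lemma tadd_tneg: "tadd n p (tneg t) t = (\<lambda>_ _ _. 0)"
  by (intro ext) (simp add: tadd_def tneg_def mod_simps)

lemma sadd_sneg: "sadd n p (sneg s) s = (\<lambda>_ _. 0)"
  by (intro ext) (simp add: sadd_def sneg_def mod_simps)

abbreviation "B \<equiv> bT n p r m b"

lemma bT_apply:
  "B t t' z i = (if z < n then
     (if i + 1 < r z then b z (t z i) (t' z i)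
      else if i + 1 = r z then (\<Sum>j<m z. b z (t z j) (t' z j)) mod int (p z) else 0) else 0)"
  by (simp add: bT_def bprime_def)

lemma bT_closed:
  assumes "t \<in> T" "t' \<in> T"
  shows "B t t' \<in> S"
proof -
  have "B t t' z \<in> Zp_space (p z) (r z)" if "z < n" for z
    unfolding Zp_space_iff[OF p_pos[OF that]]
    using that assms by (simp add: bT_apply b_mod T_component_in_V)
  then show ?thesis by (simp add: S_iff bT_def)
qed

lemma bT_sym:
  assumes "t \<in> T" "t' \<in> T"
  shows "B t t' = B t' t"
proof (intro ext)
  fix z i
  have "z < n \<Longrightarrow> b z (t z j) (t' z j) = b z (t' z j) (t z j)" for j
    using assms b_sym T_component_in_V by blast
  then show "B t t' z i = B t' t z i" by (simp add: bT_apply)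
qed

lemma bT_add_left:
  assumes "t \<in> T" "t' \<in> T" "t'' \<in> T" "z < n"
  shows "B (tadd n p t t') t'' z i = (B t t'' z i + B t' t'' z i) mod int (p z)"
proof -
  have "\<And>j. b z (vadd (p z) (t z j) (t' z j)) (t'' z j) = (b z (t z j) (t'' z j) + b z (t' z j) (t'' z j)) mod int (p z)"
    using assms by (simp add: b_add_left T_component_in_V)
  moreover have "(\<Sum>j<m z. (b z (t z j) (t'' z j) + b z (t' z j) (t'' z j)) mod int (p z)) mod int (p z)
      = ((\<Sum>j<m z. b z (t z j) (t'' z j)) mod int (p z) + (\<Sum>j<m z. b z (t' z j) (t'' z j)) mod int (p z)) mod int (p z)"
    by (simp add: mod_sum_eq sum.distrib mod_simps)
  ultimately show ?thesis using assms by (simp add: bT_apply tadd_apply b_mod T_component_in_V)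
qed

lemma bT_add_right:
  assumes "t \<in> T" "t' \<in> T" "t'' \<in> T" "z < n"
  shows "B t'' (tadd n p t t') z i = (B t'' t z i + B t'' t' z i) mod int (p z)"
  using bT_add_left[OF assms] bT_sym assms tadd_closed by metis

lemma bT_zero_left: "t \<in> T \<Longrightarrow> B (\<lambda>_ _ _. 0) t = (\<lambda>_ _. 0)"
  by (intro ext) (simp add: bT_apply b_zero_left T_component_in_V)

lemma bT_zero_right: "t \<in> T \<Longrightarrow> B t (\<lambda>_ _ _. 0) = (\<lambda>_ _. 0)"
  using bT_zero_left bT_sym zero_in_T by metis

text \<open>The exponent with which \<open>\<alpha>\<^sub>s\<close> applies \<open>f z\<close> to component \<open>j\<close> of \<open>T\<^sub>z\<close>: the paper's
  \<open>\<mu>\<^sub>j\<^sub>+\<^sub>1 + \<mu>\<^sub>r\<close> for \<open>j + 1 < r\<close> and \<open>\<mu>\<^sub>r\<close> otherwise, where \<open>\<mu>\<close> are the coordinates of \<open>s\<^sub>z\<^sub>-\<^sub>1\<close>.\<close>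

definition alpha_exp :: "(nat \<Rightarrow> nat \<Rightarrow> int) \<Rightarrow> nat \<Rightarrow> nat \<Rightarrow> nat" where
  "alpha_exp s z j = (if j + 1 < r (cpred n z)
     then nat (s (cpred n z) j + s (cpred n z) (r (cpred n z) - 1))
     else nat (s (cpred n z) (r (cpred n z) - 1)))"

abbreviation "al \<equiv> alpha n r m f"

lemma alpha_apply: "al s t z j = (if z < n \<and> j < m z then (f z ^^ alpha_exp s z j) (t z j) else (\<lambda>_. 0))"
  by (simp add: alpha_def fshift_def alpha_exp_def)

lemma alpha_closed: "t \<in> T \<Longrightarrow> al s t \<in> T"
  by (auto simp: T_iff alpha_apply f_pow_closed)

lemma alpha_additive:
  "t \<in> T \<Longrightarrow> t' \<in> T \<Longrightarrow> al s (tadd n p t t') = tadd n p (al s t) (al s t')"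
  by (rule T_eqI) (auto simp: tadd_closed alpha_closed alpha_apply tadd_apply f_pow_additive T_component)

lemma alpha_zero: "t \<in> T \<Longrightarrow> al (\<lambda>_ _. 0) t = t"
  by (rule T_eqI) (auto simp: alpha_closed alpha_apply alpha_exp_def)

lemma bT_alpha:
  assumes "t \<in> T" "t' \<in> T"
  shows "B (al s t) (al s t') = B t t'"
proof (intro ext)
  fix z i
  show "B (al s t) (al s t') z i = B t t' z i"
  proof (cases "z < n")
    case True
    have "(\<Sum>j<m z. b z (al s t z j) (al s t' z j)) = (\<Sum>j<m z. b z (t z j) (t' z j))"
      using True assms by (intro sum.cong) (auto simp: alpha_apply f_pow_preserves_form T_component)
    moreover have "r z \<le> m z" using m_ge True by blast
    ultimately show ?thesis
      using True assms by (auto simp: bT_apply alpha_apply f_pow_preserves_form T_component)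
  qed (simp add: bT_apply)
qed

lemma int_alpha_exp:
  assumes "s \<in> S"
  shows "int (alpha_exp s z j) = (if j + 1 < r (cpred n z)
    then s (cpred n z) j + s (cpred n z) (r (cpred n z) - 1) else s (cpred n z) (r (cpred n z) - 1))"
  using S_bounds[OF assms cpred_less] by (simp add: alpha_exp_def)

lemma alpha_exp_sadd:
  assumes "s \<in> S" "s' \<in> S"
  shows "(alpha_exp s z j + alpha_exp s' z j) mod p (cpred n z) = alpha_exp (sadd n p s s') z j mod p (cpred n z)"
proof -
  have "int (alpha_exp s z j + alpha_exp s' z j) mod int (p (cpred n z))
      = int (alpha_exp (sadd n p s s') z j) mod int (p (cpred n z))"
    unfolding of_nat_add int_alpha_exp[OF assms(1)] int_alpha_exp[OF assms(2)]
      int_alpha_exp[OF sadd_closed[OF assms]]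
    using cpred_less by (simp add: sadd_def mod_simps, simp add: ac_simps)
  then have "int ((alpha_exp s z j + alpha_exp s' z j) mod p (cpred n z))
      = int (alpha_exp (sadd n p s s') z j mod p (cpred n z))"
    by (simp add: zmod_int)
  then show ?thesis by linarith
qed

lemma alpha_sadd:
  assumes "s \<in> S" "s' \<in> S" "t \<in> T"
  shows "al s (al s' t) = al (sadd n p s s') t"
proof (rule T_eqI)
  fix z j assume z: "z < n" and j: "j < m z"
  have "(f z ^^ alpha_exp s z j) ((f z ^^ alpha_exp s' z j) (t z j))
      = (f z ^^ (alpha_exp s z j + alpha_exp s' z j)) (t z j)"
    by (simp add: funpow_add)
  also have "\<dots> = (f z ^^ alpha_exp (sadd n p s s') z j) (t z j)"
    using alpha_exp_sadd[OF assms(1,2)] z j assms(3) by (intro f_pow_cong) (auto simp: T_component)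
  finally show "al s (al s' t) z j = al (sadd n p s s') t z j"
    using z j by (simp add: alpha_apply)
qed (use assms in \<open>auto intro: alpha_closed\<close>)

abbreviation "A \<equiv> asym_carrier n p d m r"
abbreviation "pl \<equiv> asym_add n p r m b"
abbreviation "tm \<equiv> asym_mul n p r m f"

lemma A_iff: "x \<in> A \<longleftrightarrow> fst x \<in> T \<and> snd x \<in> S"
  by (cases x) (simp add: asym_carrier_def)

lemma asym_add_closed: "x \<in> A \<Longrightarrow> y \<in> A \<Longrightarrow> pl x y \<in> A"
  by (simp add: A_iff asym_add_def tadd_closed sadd_closed bT_closed)

lemma asym_mul_closed: "x \<in> A \<Longrightarrow> y \<in> A \<Longrightarrow> tm x y \<in> A"
  by (simp add: A_iff asym_mul_def tadd_closed sadd_closed alpha_closed)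

lemma zero_in_A: "asym_zero \<in> A"
  by (simp add: A_iff asym_zero_def zero_in_T zero_in_S)

lemma asym_add_assoc:
  assumes "x \<in> A" "y \<in> A" "w \<in> A"
  shows "pl (pl x y) w = pl x (pl y w)"
proof -
  obtain tx sx ty sy tw sw where xyw: "x = (tx, sx)" "y = (ty, sy)" "w = (tw, sw)"
    by (cases x, cases y, cases w) auto
  have t: "tx \<in> T" "ty \<in> T" "tw \<in> T" using assms xyw by (auto simp: A_iff)
  have "sadd n p (sadd n p (sadd n p (sadd n p sx sy) (B tx ty)) sw) (B (tadd n p tx ty) tw)
      = sadd n p (sadd n p sx (sadd n p (sadd n p sy sw) (B ty tw))) (B tx (tadd n p ty tw))"
    by (intro ext) (simp add: sadd_def bT_add_left bT_add_right t mod_simps, simp add: ac_simps)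
  then show ?thesis using xyw by (simp add: asym_add_def tadd_assoc)
qed

lemma asym_add_comm: "x \<in> A \<Longrightarrow> y \<in> A \<Longrightarrow> pl x y = pl y x"
  by (cases x, cases y) (simp add: asym_add_def tadd_comm sadd_comm bT_sym A_iff)

lemma asym_add_zero_left: "x \<in> A \<Longrightarrow> pl asym_zero x = x"
  by (cases x) (simp add: asym_add_def asym_zero_def A_iff tadd_zero_left sadd_zero_left sadd_zero_right bT_zero_left)

definition asym_neg :: "asym_elem \<Rightarrow> asym_elem" where
  "asym_neg x = (tneg (fst x), sneg (sadd n p (snd x) (B (tneg (fst x)) (fst x))))"

lemma asym_neg_closed: "x \<in> A \<Longrightarrow> asym_neg x \<in> A"
  by (simp add: asym_neg_def A_iff tneg_closed sneg_closed sadd_closed bT_closed)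

lemma asym_add_neg_left: "pl (asym_neg x) x = asym_zero"
proof -
  obtain t s where "x = (t, s)" by (cases x)
  moreover have "sadd n p (sadd n p (sneg (sadd n p s (B (tneg t) t))) s) (B (tneg t) t) = (\<lambda>_ _. 0)"
    by (intro ext) (simp add: sadd_def sneg_def mod_simps)
  ultimately show ?thesis by (simp add: asym_neg_def asym_add_def asym_zero_def tadd_tneg)
qed

lemma additive_comm_group: "comm_group (add_grp A pl asym_zero)"
proof (rule comm_groupI)
  fix x assume "x \<in> carrier (add_grp A pl asym_zero)"
  then show "\<exists>y\<in>carrier (add_grp A pl asym_zero). y \<otimes>\<^bsub>add_grp A pl asym_zero\<^esub> x = \<one>\<^bsub>add_grp A pl asym_zero\<^esub>"
    using asym_add_neg_left asym_neg_closed by (simp add: add_grp_def) blast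
next
  fix x y assume "x \<in> carrier (add_grp A pl asym_zero)" "y \<in> carrier (add_grp A pl asym_zero)"
  then show "x \<otimes>\<^bsub>add_grp A pl asym_zero\<^esub> y = y \<otimes>\<^bsub>add_grp A pl asym_zero\<^esub> x"
    using asym_add_comm by (simp add: add_grp_def)
qed (simp_all add: add_grp_def asym_add_closed zero_in_A asym_add_assoc asym_add_zero_left)

lemma additive_group: "group (add_grp A pl asym_zero)"
  using additive_comm_group comm_group.axioms(2) by blast

lemma asym_mul_assoc:
  assumes "x \<in> A" "y \<in> A" "w \<in> A"
  shows "tm (tm x y) w = tm x (tm y w)"
proof -
  obtain tx sx ty sy tw sw where xyw: "x = (tx, sx)" "y = (ty, sy)" "w = (tw, sw)"
    by (cases x, cases y, cases w) auto
  have "tx \<in> T" "ty \<in> T" "tw \<in> T" "sx \<in> S" "sy \<in> S" "sw \<in> S"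
    using assms xyw by (auto simp: A_iff)
  then have "al sx (tadd n p ty (al sy tw)) = tadd n p (al sx ty) (al (sadd n p sx sy) tw)"
    by (simp add: alpha_additive alpha_closed alpha_sadd)
  then show ?thesis using xyw by (simp add: asym_mul_def tadd_assoc sadd_assoc)
qed

lemma asym_mul_zero_left: "x \<in> A \<Longrightarrow> tm asym_zero x = x"
  by (cases x) (simp add: asym_mul_def asym_zero_def A_iff tadd_zero_left sadd_zero_left alpha_zero)

definition asym_inv :: "asym_elem \<Rightarrow> asym_elem" where
  "asym_inv x = (tneg (al (sneg (snd x)) (fst x)), sneg (snd x))"

lemma asym_inv_closed: "x \<in> A \<Longrightarrow> asym_inv x \<in> A"
  by (simp add: asym_inv_def A_iff tneg_closed sneg_closed alpha_closed)

lemma asym_mul_inv_left: "x \<in> A \<Longrightarrow> tm (asym_inv x) x = asym_zero"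
  by (cases x) (simp add: asym_inv_def asym_mul_def asym_zero_def tadd_tneg sadd_sneg)

lemma multiplicative_group: "group (mul_grp A tm asym_zero)"
proof (rule groupI)
  fix x assume "x \<in> carrier (mul_grp A tm asym_zero)"
  then show "\<exists>y\<in>carrier (mul_grp A tm asym_zero). y \<otimes>\<^bsub>mul_grp A tm asym_zero\<^esub> x = \<one>\<^bsub>mul_grp A tm asym_zero\<^esub>"
    using asym_mul_inv_left asym_inv_closed by (simp add: mul_grp_def) blast
qed (simp_all add: mul_grp_def asym_mul_closed zero_in_A asym_mul_assoc asym_mul_zero_left)

lemma brace_compatibility:
  assumes "a \<in> A" "x \<in> A" "y \<in> A"
  shows "pl (tm a (pl x y)) a = pl (tm a x) (tm a y)"
proof -
  obtain ta sa tx sx ty sy where axy: "a = (ta, sa)" "x = (tx, sx)" "y = (ty, sy)"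
    by (cases a, cases x, cases y) auto
  have t: "ta \<in> T" "tx \<in> T" "ty \<in> T" "sa \<in> S" "sx \<in> S" "sy \<in> S"
    using assms axy by (auto simp: A_iff)
  define ax where "ax = al sa tx"
  define ay where "ay = al sa ty"
  have ai: "ax \<in> T" "ay \<in> T" using t by (simp_all add: ax_def ay_def alpha_closed)
  have al2: "al sa (tadd n p tx ty) = tadd n p ax ay" using t by (simp add: ax_def ay_def alpha_additive)
  have bxy: "B ax ay = B tx ty" using t by (simp add: ax_def ay_def bT_alpha)
  have tadd_part: "tadd n p (tadd n p ta (tadd n p ax ay)) ta = tadd n p (tadd n p ta ax) (tadd n p ta ay)"
    by (intro ext) (simp add: tadd_def mod_simps)
  have sadd_part: "sadd n p (sadd n p (sadd n p sa (sadd n p (sadd n p sx sy) (B tx ty))) sa) (B (tadd n p ta (tadd n p ax ay)) ta)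
     = sadd n p (sadd n p (sadd n p sa sx) (sadd n p sa sy)) (B (tadd n p ta ax) (tadd n p ta ay))"
  proof (intro ext)
    fix z i
    show "sadd n p (sadd n p (sadd n p sa (sadd n p (sadd n p sx sy) (B tx ty))) sa) (B (tadd n p ta (tadd n p ax ay)) ta) z i
     = sadd n p (sadd n p (sadd n p sa sx) (sadd n p sa sy)) (B (tadd n p ta ax) (tadd n p ta ay)) z i"
    proof (cases "z < n")
      case z: True
      have "B (tadd n p ta (tadd n p ax ay)) ta z i = (B ta ta z i + (B ax ta z i + B ay ta z i) mod int (p z)) mod int (p z)"
        using z t ai by (simp add: bT_add_left tadd_closed)
      moreover have "B (tadd n p ta ax) (tadd n p ta ay) z i
          = ((B ta ta z i + B ax ta z i) mod int (p z) + (B ta ay z i + B ax ay z i) mod int (p z)) mod int (p z)"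
        using z t ai by (simp add: bT_add_left bT_add_right tadd_closed)
      moreover have "B ta ay = B ay ta" using t ai bT_sym by blast
      ultimately show ?thesis
        by (simp add: z sadd_def bxy mod_simps, simp add: ac_simps)
    qed (simp add: sadd_def)
  qed
  show ?thesis using axy tadd_part sadd_part by (simp add: asym_add_def asym_mul_def al2 ax_def ay_def)
qed

lemma asym_left_brace: "left_brace A pl asym_zero tm"
  unfolding left_brace_def using additive_comm_group multiplicative_group brace_compatibility by blast

end

context asym_product
begin

lemma brace_lambda_eq:
  assumes "a \<in> A" "x \<in> A"
  shows "brace_lambda A pl asym_zero tm a x
    = (al (snd a) (fst x), sadd n p (snd x) (sneg (B (al (snd a) (fst x)) (fst a))))"
proof -
  interpret G: group "add_grp A pl asym_zero" by (rule additive_group)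
  obtain ta sa tx sx where ax: "a = (ta, sa)" "x = (tx, sx)" by (cases a, cases x) auto
  have t: "ta \<in> T" "tx \<in> T" "sa \<in> S" "sx \<in> S" using assms ax by (auto simp: A_iff)
  define v where "v = (al sa tx, sadd n p sx (sneg (B (al sa tx) ta)))"
  have vA: "v \<in> A" using t by (simp add: v_def A_iff alpha_closed sadd_closed sneg_closed bT_closed)
  have "sadd n p (sadd n p (sadd n p sx (sneg (B (al sa tx) ta))) sa) (B (al sa tx) ta) = sadd n p sa sx"
    by (intro ext) (simp add: sadd_def sneg_def mod_simps add.commute)
  then have e: "pl v a = tm a x" using ax by (simp add: v_def asym_add_def asym_mul_def tadd_comm)
  have "brace_lambda A pl asym_zero tm a x = pl (pl v a) (inv\<^bsub>add_grp A pl asym_zero\<^esub> a)"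
    by (simp add: brace_lambda_def e)
  also have "\<dots> = pl v (pl a (inv\<^bsub>add_grp A pl asym_zero\<^esub> a))"
    using G.m_assoc[of v a "inv\<^bsub>add_grp A pl asym_zero\<^esub> a"] vA assms G.inv_closed[of a]
    by (simp add: add_grp_def)
  also have "\<dots> = v" using G.r_inv[of a] G.r_one[of v] vA assms by (simp add: add_grp_def)
  finally show ?thesis using ax by (simp add: v_def)
qed

definition single_T :: "nat \<Rightarrow> nat \<Rightarrow> (nat \<Rightarrow> int) \<Rightarrow> (nat \<Rightarrow> nat \<Rightarrow> nat \<Rightarrow> int)" where
  "single_T z j w = (\<lambda>z' j'. if z' = z \<and> j' = j then w else (\<lambda>_. 0))"

definition single_S :: "nat \<Rightarrow> nat \<Rightarrow> int \<Rightarrow> (nat \<Rightarrow> nat \<Rightarrow> int)" where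
  "single_S z i c = (\<lambda>z' i'. if z' = z \<and> i' = i then c else 0)"

definition scale_S :: "nat \<Rightarrow> (nat \<Rightarrow> nat \<Rightarrow> int) \<Rightarrow> (nat \<Rightarrow> nat \<Rightarrow> int)" where
  "scale_S k s = (\<lambda>z i. if z < n then (int k * s z i) mod int (p z) else 0)"

lemma single_T_closed: "z < n \<Longrightarrow> j < m z \<Longrightarrow> w \<in> V z \<Longrightarrow> single_T z j w \<in> T"
  by (auto simp: T_iff single_T_def zero_in_Zp_space p_pos)

lemma single_S_closed:
  assumes "z < n" "i < r z" "0 \<le> c" "c < int (p z)"
  shows "single_S z i c \<in> S"
  using assms p_pos by (auto simp: S_iff Zp_space_def single_S_def)

lemma scale_S_closed:
  assumes "s \<in> S"
  shows "scale_S k s \<in> S"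
proof -
  have "scale_S k s z \<in> Zp_space (p z) (r z)" if "z < n" for z
    using S_component[OF assms that] p_pos[OF that] that by (auto simp: Zp_space_def scale_S_def)
  then show ?thesis by (simp add: S_iff scale_S_def)
qed

lemma bT_single_T:
  assumes "z < n" "j < m z" "w \<in> V z" "w' \<in> V z"
  shows "B (single_T z j w) (single_T z j w')
    = (\<lambda>z' i. if z' = z \<and> (i = j \<and> i + 1 < r z \<or> i + 1 = r z) then b z w w' else 0)"
proof (intro ext)
  fix z' i
  have "(\<Sum>j'<m z. b z (single_T z j w z j') (single_T z j w' z j')) = b z w w'"
    using assms by (simp add: single_T_def b_zero_left zero_in_Zp_space p_pos if_distrib sum.delta
        cong: if_cong)
  moreover have "b z' (single_T z j w z' j') (single_T z j w' z' j') = 0" if "z' < n" "z' \<noteq> z" for j'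
    using that by (simp add: single_T_def b_zero_left zero_in_Zp_space p_pos)
  ultimately show "B (single_T z j w) (single_T z j w') z' i
      = (if z' = z \<and> (i = j \<and> i + 1 < r z \<or> i + 1 = r z) then b z w w' else 0)"
    using assms by (auto simp: bT_apply single_T_def b_mod b_zero_left zero_in_Zp_space p_pos)
qed

lemma bT_disjoint_support:
  assumes "t \<in> T" "t' \<in> T" "\<forall>z j. t z j = (\<lambda>_. 0) \<or> t' z j = (\<lambda>_. 0)"
  shows "B t t' = (\<lambda>_ _. 0)"
proof -
  have "b z (t z j) (t' z j) = 0" if "z < n" for z j
    using assms T_component_in_V b_zero_left b_zero_right that by metis
  then show ?thesis by (intro ext) (simp add: bT_apply)
qed

lemma alpha_exp_scale:
  assumes "s \<in> S"
  shows "alpha_exp (scale_S k s) z j mod p (cpred n z) = (k * alpha_exp s z j) mod p (cpred n z)"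
proof -
  have "int (alpha_exp (scale_S k s) z j) mod int (p (cpred n z))
      = int (k * alpha_exp s z j) mod int (p (cpred n z))"
    unfolding of_nat_mult int_alpha_exp[OF assms] int_alpha_exp[OF scale_S_closed[OF assms]]
    using cpred_less by (simp add: scale_S_def mod_simps distrib_left)
  then have "int (alpha_exp (scale_S k s) z j mod p (cpred n z)) = int (k * alpha_exp s z j mod p (cpred n z))"
    by (simp add: zmod_int)
  then show ?thesis by linarith
qed

abbreviation is_ideal :: "asym_elem set \<Rightarrow> bool" where
  "is_ideal I \<equiv> brace_ideal A pl asym_zero tm I"

lemma ideal_subgroup: "is_ideal I \<Longrightarrow> subgroup I (add_grp A pl asym_zero)"
  by (simp add: brace_ideal_def brace_left_ideal_def)

lemma ideal_subset: "is_ideal I \<Longrightarrow> I \<subseteq> A"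
  using subgroup.subset[OF ideal_subgroup] by (simp add: add_grp_def)

lemma ideal_T: "is_ideal I \<Longrightarrow> (t, s) \<in> I \<Longrightarrow> t \<in> T"
  using ideal_subset by (force simp: A_iff)

lemma ideal_S: "is_ideal I \<Longrightarrow> (t, s) \<in> I \<Longrightarrow> s \<in> S"
  using ideal_subset by (force simp: A_iff)

lemma ideal_add_closed: "is_ideal I \<Longrightarrow> x \<in> I \<Longrightarrow> y \<in> I \<Longrightarrow> pl x y \<in> I"
  using subgroup.m_closed[OF ideal_subgroup] by (simp add: add_grp_def)

lemma ideal_zero: "is_ideal I \<Longrightarrow> asym_zero \<in> I"
  using subgroup.one_closed[OF ideal_subgroup] by (simp add: add_grp_def)

lemma ideal_add_cancel_right:
  assumes "is_ideal I" "u \<in> I" "v \<in> A" "pl v u \<in> I"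
  shows "v \<in> I"
  using group.subgroup_mult_cancel_right[OF additive_group ideal_subgroup[OF assms(1)] assms(2)] assms(3,4)
  by (simp add: add_grp_def)

lemma ideal_lambda_closed: "is_ideal I \<Longrightarrow> a \<in> A \<Longrightarrow> x \<in> I \<Longrightarrow> brace_lambda A pl asym_zero tm a x \<in> I"
  by (simp add: brace_ideal_def brace_left_ideal_def)

lemma ideal_conj_closed:
  assumes "is_ideal I" "g \<in> A" "h \<in> I" "h' \<in> A" "tm g h' = tm h g"
  shows "h' \<in> I"
proof -
  obtain e where e: "group (mul_grp A tm e)" "I \<lhd> mul_grp A tm e"
    using assms(1) by (auto simp: brace_ideal_def)
  show ?thesis
    using group.normal_conj_mem[OF e, of g h h'] assms(2-5) by (simp add: mul_grp_def)
qed

lemma ideal_bT_mem: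
  assumes I: "is_ideal I" and xy: "(x, y) \<in> I" and t: "t \<in> T"
  shows "((\<lambda>_ _ _. 0), B x t) \<in> I"
proof -
  have xyA: "(x, y) \<in> A" using xy ideal_subset I by blast
  then have xT: "x \<in> T" and yS: "y \<in> S" by (auto simp: A_iff)
  have tA: "(t, (\<lambda>_ _. 0)) \<in> A" using t zero_in_S by (simp add: A_iff)
  have "brace_lambda A pl asym_zero tm (t, (\<lambda>_ _. 0)) (x, y) \<in> I"
    using ideal_lambda_closed[OF I tA xy] .
  then have u: "(x, sadd n p y (sneg (B x t))) \<in> I"
    using brace_lambda_eq[OF tA xyA] xT by (simp add: alpha_zero)
  have vA: "((\<lambda>_ _ _. 0), B x t) \<in> A" using xT t by (simp add: A_iff zero_in_T bT_closed)
  have "sadd n p (sadd n p (B x t) (sadd n p y (sneg (B x t)))) (B (\<lambda>_ _ _. 0) x) = y"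
    using yS xT by (intro ext) (auto simp: sadd_def sneg_def bT_zero_left mod_simps S_mod S_outside)
  then have "pl ((\<lambda>_ _ _. 0), B x t) (x, sadd n p y (sneg (B x t))) = (x, y)"
    using xT by (simp add: asym_add_def tadd_zero_left)
  then show ?thesis using ideal_add_cancel_right[OF I u vA] xy by simp
qed

text \<open>Conjugating \<open>(u, 0)\<close> by \<open>(0, s)\<close> in the multiplicative group moves \<open>u\<close> to \<open>\<alpha>\<^sub>s u\<close>.\<close>

lemma ideal_alpha_diff_mem:
  assumes I: "is_ideal I" and h: "((\<lambda>_ _ _. 0), s) \<in> I" and u: "u \<in> T"
  shows "(tadd n p (tneg u) (al s u), (\<lambda>_ _. 0)) \<in> I"
proof -
  have s: "s \<in> S" using ideal_S[OF I h] .
  define D where "D = tadd n p (tneg u) (al s u)"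
  have DT: "D \<in> T" using u by (simp add: D_def tadd_closed tneg_closed alpha_closed)
  have "tadd n p u D = al s u"
    unfolding D_def using alpha_closed[OF u, of s]
    by (intro ext) (auto simp: tadd_def tneg_def mod_simps T_mod T_outside)
  then have "tm (u, (\<lambda>_ _. 0)) (D, s) = tm ((\<lambda>_ _ _. 0), s) (u, (\<lambda>_ _. 0))"
    using DT s u alpha_closed[OF u, of s]
    by (simp add: asym_mul_def alpha_zero tadd_zero_left sadd_zero_left sadd_zero_right)
  moreover have "(u, (\<lambda>_ _. 0)) \<in> A" "(D, s) \<in> A" using u DT s zero_in_S by (simp_all add: A_iff)
  ultimately have Ds: "(D, s) \<in> I" using ideal_conj_closed[OF I _ h] by blast
  have "tadd n p D (\<lambda>_ _ _. 0) = D" using tadd_zero_left[OF DT] tadd_comm by metis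
  then have "pl (D, (\<lambda>_ _. 0)) ((\<lambda>_ _ _. 0), s) = (D, s)"
    using DT s by (simp add: asym_add_def sadd_zero_left sadd_zero_right bT_zero_right)
  then show ?thesis
    using ideal_add_cancel_right[OF I h] Ds DT zero_in_S by (simp add: D_def A_iff)
qed

lemma ideal_scale_mem:
  assumes I: "is_ideal I" and h: "((\<lambda>_ _ _. 0), s) \<in> I"
  shows "((\<lambda>_ _ _. 0), scale_S k s) \<in> I"
proof (induction k)
  case 0
  have "scale_S 0 s = (\<lambda>_ _. 0)" by (simp add: scale_S_def fun_eq_iff)
  then show ?case using ideal_zero[OF I] by (simp add: asym_zero_def)
next
  case (Suc k)
  have "sadd n p (sadd n p (scale_S k s) s) (B (\<lambda>_ _ _. 0) (\<lambda>_ _ _. 0)) = scale_S (Suc k) s"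
    by (intro ext) (simp add: sadd_def scale_S_def bT_zero_left zero_in_T mod_simps algebra_simps)
  then have "pl ((\<lambda>_ _ _. 0), scale_S k s) ((\<lambda>_ _ _. 0), s) = ((\<lambda>_ _ _. 0), scale_S (Suc k) s)"
    by (simp add: asym_add_def tadd_zero_left zero_in_T)
  then show ?case using ideal_add_closed[OF I Suc h] by simp
qed

lemma alpha_diff_single_T:
  assumes "z < n" "j < m z" "u \<in> V z"
  shows "tadd n p (tneg (single_T z j u)) (al s (single_T z j u))
    = single_T z j (vsub (p z) ((f z ^^ alpha_exp s z j) u) u)"
proof (intro ext)
  fix z' j' i
  show "tadd n p (tneg (single_T z j u)) (al s (single_T z j u)) z' j' i
      = single_T z j (vsub (p z) ((f z ^^ alpha_exp s z j) u) u) z' j' i"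
  proof (cases "z' = z \<and> j' = j")
    case True
    then show ?thesis
      using assms by (simp add: tadd_def tneg_def alpha_apply single_T_def vsub_def mod_simps)
  next
    case False
    then have "al s (single_T z j u) z' j' = (\<lambda>_. 0)"
      by (auto simp: alpha_apply single_T_def f_pow_zero)
    then show ?thesis using False by (auto simp: tadd_def tneg_def single_T_def)
  qed
qed

lemma ideal_form_of_singles:
  assumes I: "is_ideal I" and z: "z < n" and j: "j < m z"
    and singles: "\<forall>w\<in>V z. (single_T z j w, (\<lambda>_ _. 0)) \<in> I"
  obtains w w' where "w \<in> V z" "w' \<in> V z" "b z w w' \<noteq> 0"
    "((\<lambda>_ _ _. 0), B (single_T z j w) (single_T z j w')) \<in> I"
proof -
  obtain w where w: "w \<in> V z" "w \<noteq> (\<lambda>_. 0)" using V_nontrivial z by blast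
  obtain w' where w': "w' \<in> V z" "b z w w' \<noteq> 0" using b_nondegenerate z w by blast
  show thesis
    using that w w' ideal_bT_mem[OF I singles[rule_format, OF w(1)] single_T_closed[OF z j w'(1)]]
    by blast
qed

definition ideal_meets_top :: "asym_elem set \<Rightarrow> nat \<Rightarrow> bool" where
  "ideal_meets_top I z \<longleftrightarrow> (\<exists>s. ((\<lambda>_ _ _. 0), s) \<in> I \<and> s z (r z - 1) \<noteq> 0)"

lemma ideal_meets_top_of_singles:
  assumes I: "is_ideal I" and z: "z < n" and j: "j < m z"
    and singles: "\<forall>w\<in>V z. (single_T z j w, (\<lambda>_ _. 0)) \<in> I"
  shows "ideal_meets_top I z"
proof -
  obtain w w' where w: "w \<in> V z" "w' \<in> V z" "b z w w' \<noteq> 0"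
    and mem: "((\<lambda>_ _ _. 0), B (single_T z j w) (single_T z j w')) \<in> I"
    using ideal_form_of_singles[OF assms] .
  have "r z - 1 + 1 = r z" using r_pos z by simp
  then have "B (single_T z j w) (single_T z j w') z (r z - 1) = b z w w'"
    using bT_single_T[OF z j w(1,2)] by simp
  then show ?thesis using mem w(3) unfolding ideal_meets_top_def by auto
qed

lemma ideal_meets_top_of_fst_nonzero:
  assumes I: "is_ideal I" and xy: "(x, y) \<in> I" and x: "x \<noteq> (\<lambda>_ _ _. 0)"
  shows "\<exists>z<n. ideal_meets_top I z"
proof -
  have xT: "x \<in> T" using ideal_T[OF I xy] .
  obtain z j where zj: "x z j \<noteq> (\<lambda>_. 0)" using x by (metis ext)
  then have z: "z < n" and j: "j < m z" using T_outside xT by blast+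
  have xv: "x z j \<in> V z" using T_component xT z j by blast
  obtain w where w: "w \<in> V z" "b z (x z j) w \<noteq> 0" using b_nondegenerate z xv zj by blast
  have "(\<Sum>j'<m z. b z (x z j') (single_T z j w z j')) = b z (x z j) w"
    using xT z j by (simp add: single_T_def b_zero_right T_component_in_V if_distrib sum.delta
        cong: if_cong)
  moreover have "r z - 1 + 1 = r z" using r_pos z by simp
  ultimately have "B x (single_T z j w) z (r z - 1) = b z (x z j) w"
    using z xv w by (simp add: bT_apply b_mod)
  then show ?thesis
    using ideal_bT_mem[OF I xy single_T_closed[OF z j w(1)]] w(2) z
    unfolding ideal_meets_top_def by force
qed

lemma ideal_top_single_of_singles:
  assumes I: "is_ideal I" and z: "z < n"
    and singles: "\<forall>w\<in>V z. (single_T z (m z - 1) w, (\<lambda>_ _. 0)) \<in> I"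
  shows "\<exists>c. 0 < c \<and> c < int (p z) \<and> ((\<lambda>_ _ _. 0), single_S z (r z - 1) c) \<in> I"
proof -
  have rm: "0 < r z" "r z \<le> m z" using r_pos m_ge z by auto
  then have j: "m z - 1 < m z" by simp
  obtain w w' where w: "w \<in> V z" "w' \<in> V z" "b z w w' \<noteq> 0"
    and mem: "((\<lambda>_ _ _. 0), B (single_T z (m z - 1) w) (single_T z (m z - 1) w')) \<in> I"
    using ideal_form_of_singles[OF I z j singles] .
  have "B (single_T z (m z - 1) w) (single_T z (m z - 1) w') = single_S z (r z - 1) (b z w w')"
    unfolding bT_single_T[OF z j w(1,2)] using rm by (auto simp: single_S_def fun_eq_iff)
  moreover have "0 < b z w w'" "b z w w' < int (p z)" using b_bounds[OF z w(1,2)] w(3) by auto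
  ultimately show ?thesis using mem by auto
qed

lemma ideal_single_S_rescale:
  assumes I: "is_ideal I" and z: "z < n" and h: "((\<lambda>_ _ _. 0), single_S z i c0) \<in> I"
    and c0: "0 < c0" "c0 < int (p z)" and c: "0 \<le> c" "c < int (p z)"
  shows "((\<lambda>_ _ _. 0), single_S z i c) \<in> I"
proof -
  obtain k0 where k0: "(int k0 * c0) mod int (p z) = 1"
    using prime_mod_inverse p_prime z c0 by force
  have "(int (k0 * nat c) * c0) mod int (p z) = (c * ((int k0 * c0) mod int (p z))) mod int (p z)"
    using c by (simp add: mod_simps algebra_simps)
  also have "\<dots> = c" using k0 c by simp
  finally have "scale_S (k0 * nat c) (single_S z i c0) = single_S z i c"
    by (intro ext) (auto simp: scale_S_def single_S_def z)
  then show ?thesis using ideal_scale_mem[OF I h, of "k0 * nat c"] by simp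
qed

lemma carrier_nontrivial: "A \<noteq> {asym_zero}"
proof -
  have "single_S 0 0 1 \<in> S" using single_S_closed[OF n_pos] r_pos p_gt_1 n_pos by simp
  then have "(\<lambda>_ _ _. 0, single_S 0 0 1) \<in> A" using zero_in_T by (simp add: A_iff)
  moreover have "(\<lambda>_ _ _. 0, single_S 0 0 1) \<noteq> asym_zero"
    by (auto simp: asym_zero_def single_S_def fun_eq_iff)
  ultimately show ?thesis by blast
qed

end

section \<open>Simplicity when every \<open>f\<^sub>z - id\<close> is bijective\<close>

locale asym_product_diff_bij = asym_product +
  assumes diff_bij: "\<forall>z<n. bij_betw (\<lambda>v. vsub (p z) (f z v) v) (V z) (V z)"
begin

text \<open>Rescaling \<open>s\<close> makes \<open>\<alpha>\<^sub>s\<close> act on the slot as \<open>f z\<close> itself; then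
  \<open>-u + \<alpha>\<^sub>s u\<close> ranges over the image of \<open>f z - id\<close>, which is all of \<open>V z\<close>.\<close>

lemma ideal_single_T_mem:
  assumes I: "is_ideal I" and h: "((\<lambda>_ _ _. 0), s) \<in> I" and z: "z < n" and j: "j < m z"
    and e: "alpha_exp s z j mod p (cpred n z) \<noteq> 0" and w: "w \<in> V z"
  shows "(single_T z j w, (\<lambda>_ _. 0)) \<in> I"
proof -
  let ?q = "p (cpred n z)"
  have "int (alpha_exp s z j) mod int ?q \<noteq> 0" using e by (metis of_nat_0 of_nat_mod of_nat_eq_iff)
  then obtain k where k: "(int k * int (alpha_exp s z j)) mod int ?q = 1"
    using prime_mod_inverse p_prime cpred_less by blast
  then have "(k * alpha_exp s z j) mod ?q = 1" by (metis of_nat_mod of_nat_mult of_nat_1 of_nat_eq_iff)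
  then have e1: "alpha_exp (scale_S k s) z j mod ?q = 1 mod ?q"
    using alpha_exp_scale[OF ideal_S[OF I h], of k z j] p_gt_1[OF cpred_less[of z]] by simp
  obtain u where u: "u \<in> V z" "w = vsub (p z) (f z u) u"
    using diff_bij z w by (auto simp: bij_betw_def)
  have "(f z ^^ alpha_exp (scale_S k s) z j) u = f z u"
    using f_pow_cong[OF z u(1) e1] by simp
  then show ?thesis
    using ideal_alpha_diff_mem[OF I ideal_scale_mem[OF I h, of k] single_T_closed[OF z j u(1)]]
      alpha_diff_single_T[OF z j u(1)] u(2) by simp
qed

lemma ideal_top_single_step:
  assumes I: "is_ideal I" and z: "z < n" and top: "ideal_meets_top I (cpred n z)"
  shows "\<exists>c. 0 < c \<and> c < int (p z) \<and> ((\<lambda>_ _ _. 0), single_S z (r z - 1) c) \<in> I"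
proof -
  let ?c = "cpred n z"
  obtain s where s: "((\<lambda>_ _ _. 0), s) \<in> I" "s ?c (r ?c - 1) \<noteq> 0"
    using top unfolding ideal_meets_top_def by blast
  have "r ?c \<le> m z" "0 < r ?c" using m_ge r_pos z cpred_less by auto
  then have "alpha_exp s z (m z - 1) = nat (s ?c (r ?c - 1))" and M: "m z - 1 < m z"
    by (auto simp: alpha_exp_def)
  moreover have "0 \<le> s ?c (r ?c - 1)" "s ?c (r ?c - 1) < int (p ?c)"
    using S_bounds[OF ideal_S[OF I s(1)] cpred_less] by auto
  ultimately have "alpha_exp s z (m z - 1) mod p ?c \<noteq> 0" using s(2) by simp
  then show ?thesis
    using ideal_top_single_of_singles[OF I z] ideal_single_T_mem[OF I s(1) z M] by blast
qed

lemma ideal_meets_top_everywhere: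
  assumes I: "is_ideal I" and z0: "z0 < n" "ideal_meets_top I z0" and z: "z < n"
  shows "ideal_meets_top I z"
proof -
  have "ideal_meets_top I ((z0 + k) mod n)" for k
  proof (induction k)
    case (Suc k)
    have "cpred n (Suc (z0 + k) mod n) = (z0 + k) mod n" by (rule cpred_Suc_mod)
    then have "\<exists>c. 0 < c \<and> c < int (p (Suc (z0 + k) mod n))
        \<and> ((\<lambda>_ _ _. 0), single_S (Suc (z0 + k) mod n) (r (Suc (z0 + k) mod n) - 1) c) \<in> I"
      using ideal_top_single_step[OF I _] Suc n_pos by simp
    then show ?case by (force simp: ideal_meets_top_def single_S_def)
  qed (use z0 in simp)
  from this[of "z + n - z0"] show ?thesis using z z0 by simp
qed

lemma nonzero_ideal_meets_top:
  assumes I: "is_ideal I" and ne: "I \<noteq> {asym_zero}"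
  shows "\<exists>z<n. ideal_meets_top I z"
proof -
  obtain x y where xy: "(x, y) \<in> I" "(x, y) \<noteq> asym_zero" using ne ideal_zero[OF I] by fastforce
  have yS: "y \<in> S" using ideal_S[OF I xy(1)] .
  show ?thesis
  proof (cases "x = (\<lambda>_ _ _. 0)")
    case False
    then show ?thesis using ideal_meets_top_of_fst_nonzero[OF I xy(1)] by blast
  next
    case True
    then have h: "((\<lambda>_ _ _. 0), y) \<in> I" and "y \<noteq> (\<lambda>_ _. 0)"
      using xy by (auto simp: asym_zero_def)
    then obtain z i where zi: "y z i \<noteq> 0" by (metis ext)
    then have z: "z < n" using S_outside yS by metis
    have i: "i < r z" using zi S_component[OF yS z] by (metis Zp_space_outside not_le)
    show ?thesis
    proof (cases "y z (r z - 1) = 0")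
      case False
      then show ?thesis using h z unfolding ideal_meets_top_def by blast
    next
      case True
      txt \<open>A nonzero entry below the top of \<open>S\<^sub>z\<close> is an exponent acting on \<open>T\<^sub>z\<^sub>+\<^sub>1\<close>.\<close>
      define z' where "z' = Suc z mod n"
      have z': "z' < n" "cpred n z' = z" using cpred_Suc_mod[of z] z n_pos by (simp_all add: z'_def)
      have j: "i < m z'" using m_ge z' i by (metis order.strict_trans2)
      have "i + 1 < r z" using i True zi by (metis Suc_eq_plus1 Suc_lessI diff_Suc_1)
      then have "alpha_exp y z' i = nat (y z i)" using z' True by (simp add: alpha_exp_def)
      moreover have "0 \<le> y z i" "y z i < int (p z)" using S_bounds[OF yS z] by auto
      ultimately have "alpha_exp y z' i mod p (cpred n z') \<noteq> 0" using z' zi by simp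
      then have "ideal_meets_top I z'"
        using ideal_single_T_mem[OF I h z'(1) j] ideal_meets_top_of_singles[OF I z'(1) j] by blast
      then show ?thesis using z' by blast
    qed
  qed
qed

lemma nonzero_ideal_top_single:
  assumes I: "is_ideal I" and ne: "I \<noteq> {asym_zero}" and z: "z < n"
  shows "\<exists>c. 0 < c \<and> c < int (p z) \<and> ((\<lambda>_ _ _. 0), single_S z (r z - 1) c) \<in> I"
proof -
  obtain z0 where "z0 < n" "ideal_meets_top I z0" using nonzero_ideal_meets_top[OF I ne] by blast
  then show ?thesis
    using ideal_meets_top_everywhere[OF I _ _ cpred_less] ideal_top_single_step[OF I z] by blast
qed

lemma nonzero_ideal_single_T:
  assumes I: "is_ideal I" and ne: "I \<noteq> {asym_zero}" and z: "z < n" and j: "j < m z" and w: "w \<in> V z"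
  shows "(single_T z j w, (\<lambda>_ _. 0)) \<in> I"
proof -
  let ?c = "cpred n z"
  obtain c where c: "0 < c" "c < int (p ?c)" "((\<lambda>_ _ _. 0), single_S ?c (r ?c - 1) c) \<in> I"
    using nonzero_ideal_top_single[OF I ne cpred_less] by blast
  have "alpha_exp (single_S ?c (r ?c - 1) c) z j = nat c"
    by (auto simp: alpha_exp_def single_S_def)
  then have "alpha_exp (single_S ?c (r ?c - 1) c) z j mod p ?c \<noteq> 0" using c(1,2) by simp
  then show ?thesis using ideal_single_T_mem[OF I c(3) z j _ w] by blast
qed

lemma nonzero_ideal_single_S:
  assumes I: "is_ideal I" and ne: "I \<noteq> {asym_zero}" and z: "z < n" and i: "i < r z"
    and c: "0 \<le> c" "c < int (p z)"
  shows "((\<lambda>_ _ _. 0), single_S z i c) \<in> I"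
proof -
  let ?R = "r z - 1"
  obtain c0 where c0: "0 < c0" "c0 < int (p z)" "((\<lambda>_ _ _. 0), single_S z ?R c0) \<in> I"
    using nonzero_ideal_top_single[OF I ne z] by blast
  show ?thesis
  proof (cases "i = ?R")
    case True
    then show ?thesis using ideal_single_S_rescale[OF I z c0(3) c0(1,2) c] by simp
  next
    case False
    txt \<open>\<open>b'\<close> of two vectors in slot \<open>i\<close> is a multiple of \<open>e\<^sub>i + e\<^sub>r\<close>; subtract the \<open>e\<^sub>r\<close> part.\<close>
    then have iR: "i + 1 < r z" using i by linarith
    have im: "i < m z" using i m_ge z by (meson less_le_trans)
    obtain w w' where w: "w \<in> V z" "w' \<in> V z" "b z w w' \<noteq> 0"
      and mem: "((\<lambda>_ _ _. 0), B (single_T z i w) (single_T z i w')) \<in> I"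
      using ideal_form_of_singles[OF I z im] nonzero_ideal_single_T[OF I ne z im] by metis
    define c1 where "c1 = b z w w'"
    have c1: "0 < c1" "c1 < int (p z)" using b_bounds[OF z w(1,2)] w(3) by (auto simp: c1_def)
    have top: "((\<lambda>_ _ _. 0), single_S z ?R c1) \<in> I"
      using ideal_single_S_rescale[OF I z c0(3) c0(1,2)] c1 by simp
    have "sadd n p (sadd n p (single_S z i c1) (single_S z ?R c1)) (B (\<lambda>_ _ _. 0) (\<lambda>_ _ _. 0))
        = B (single_T z i w) (single_T z i w')"
      unfolding bT_single_T[OF z im w(1,2)]
      using c1 iR z by (intro ext) (auto simp: sadd_def single_S_def bT_zero_left zero_in_T c1_def)
    then have "pl ((\<lambda>_ _ _. 0), single_S z i c1) ((\<lambda>_ _ _. 0), single_S z ?R c1)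
        = ((\<lambda>_ _ _. 0), B (single_T z i w) (single_T z i w'))"
      by (simp add: asym_add_def tadd_zero_left zero_in_T)
    moreover have "((\<lambda>_ _ _. 0), single_S z i c1) \<in> A"
      using single_S_closed[OF z i] c1 zero_in_T by (simp add: A_iff)
    ultimately have "((\<lambda>_ _ _. 0), single_S z i c1) \<in> I"
      using ideal_add_cancel_right[OF I top] mem by simp
    then show ?thesis using ideal_single_S_rescale[OF I z _ c1 c] by simp
  qed
qed

lemma nonzero_ideal_restrict_S:
  assumes I: "is_ideal I" and ne: "I \<noteq> {asym_zero}" and s: "s \<in> S"
    and F: "finite F" "F \<subseteq> {(z, i). z < n \<and> i < r z}"
  shows "((\<lambda>_ _ _. 0), (\<lambda>z i. if (z, i) \<in> F then s z i else 0)) \<in> I"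
  using F
proof (induction F rule: finite_induct)
  case empty
  then show ?case using ideal_zero[OF I] by (simp add: asym_zero_def)
next
  case (insert x F)
  obtain z i where x: "x = (z, i)" by (cases x)
  have zi: "z < n" "i < r z" using insert x by auto
  have IH: "((\<lambda>_ _ _. 0), (\<lambda>z i. if (z, i) \<in> F then s z i else 0)) \<in> I" using insert by blast
  have single: "((\<lambda>_ _ _. 0), single_S z i (s z i)) \<in> I"
    using nonzero_ideal_single_S[OF I ne zi] S_bounds[OF s zi(1)] by blast
  have "sadd n p (sadd n p (\<lambda>z i. if (z, i) \<in> F then s z i else 0) (single_S z i (s z i)))
      (B (\<lambda>_ _ _. 0) (\<lambda>_ _ _. 0)) = (\<lambda>z' i'. if (z', i') \<in> insert x F then s z' i' else 0)"
    using insert(2,4) x zi by (intro ext) (auto simp: sadd_def single_S_def bT_zero_left zero_in_T S_mod s)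
  then have "pl ((\<lambda>_ _ _. 0), (\<lambda>z i. if (z, i) \<in> F then s z i else 0)) ((\<lambda>_ _ _. 0), single_S z i (s z i))
      = ((\<lambda>_ _ _. 0), (\<lambda>z' i'. if (z', i') \<in> insert x F then s z' i' else 0))"
    by (simp add: asym_add_def tadd_zero_left zero_in_T)
  then show ?case using ideal_add_closed[OF I IH single] by simp
qed

lemma nonzero_ideal_restrict_T:
  assumes I: "is_ideal I" and ne: "I \<noteq> {asym_zero}" and t: "t \<in> T"
    and F: "finite F" "F \<subseteq> {(z, j). z < n \<and> j < m z}"
  shows "((\<lambda>z j. if (z, j) \<in> F then t z j else (\<lambda>_. 0)), (\<lambda>_ _. 0)) \<in> I"
  using F
proof (induction F rule: finite_induct)
  case empty
  then show ?case using ideal_zero[OF I] by (simp add: asym_zero_def)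
next
  case (insert x F)
  obtain z j where x: "x = (z, j)" by (cases x)
  have zj: "z < n" "j < m z" using insert x by auto
  have tv: "t z j \<in> V z" using T_component t zj by blast
  let ?tF = "\<lambda>z j. if (z, j) \<in> F then t z j else (\<lambda>_. 0)"
  have IH: "(?tF, (\<lambda>_ _. 0)) \<in> I" using insert by blast
  have tFT: "?tF \<in> T" using t insert(4) by (auto simp: T_iff zero_in_Zp_space p_pos T_component)
  have single: "(single_T z j (t z j), (\<lambda>_ _. 0)) \<in> I" using nonzero_ideal_single_T[OF I ne zj tv] .
  have "\<forall>z' j'. ?tF z' j' = (\<lambda>_. 0) \<or> single_T z j (t z j) z' j' = (\<lambda>_. 0)"
    using insert(2) x by (auto simp: single_T_def)
  then have B0: "B ?tF (single_T z j (t z j)) = (\<lambda>_ _. 0)"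
    using bT_disjoint_support[OF tFT single_T_closed[OF zj tv]] by blast
  have "tadd n p ?tF (single_T z j (t z j)) = (\<lambda>z' j'. if (z', j') \<in> insert x F then t z' j' else (\<lambda>_. 0))"
    using insert(2,4) x zj by (intro ext) (auto simp: tadd_def single_T_def T_mod t)
  then have "pl (?tF, (\<lambda>_ _. 0)) (single_T z j (t z j), (\<lambda>_ _. 0))
      = ((\<lambda>z' j'. if (z', j') \<in> insert x F then t z' j' else (\<lambda>_. 0)), (\<lambda>_ _. 0))"
    using B0 by (simp add: asym_add_def sadd_zero_left zero_in_S)
  then show ?case using ideal_add_closed[OF I IH single] by simp
qed

lemma nonzero_ideal_eq_carrier:
  assumes I: "is_ideal I" and ne: "I \<noteq> {asym_zero}"
  shows "I = A"
proof
  show "A \<subseteq> I"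
  proof
    fix x assume "x \<in> A"
    then obtain t s where ts: "x = (t, s)" and t: "t \<in> T" and s: "s \<in> S" by (cases x) (auto simp: A_iff)
    have "s z i = 0" if "\<not> (z < n \<and> i < r z)" for z i
      using that s by (cases "z < n") (auto simp: S_outside intro: Zp_space_outside[OF S_component[OF s]])
    then have "(\<lambda>z i. if (z, i) \<in> Sigma {..<n} (\<lambda>z. {..<r z}) then s z i else 0) = s"
      by (intro ext) auto
    then have "((\<lambda>_ _ _. 0), s) \<in> I" using nonzero_ideal_restrict_S[OF I ne s, of "Sigma {..<n} (\<lambda>z. {..<r z})"] by auto
    moreover have "(\<lambda>z j. if (z, j) \<in> Sigma {..<n} (\<lambda>z. {..<m z}) then t z j else (\<lambda>_. 0)) = t"
      using T_outside[OF t] by (intro ext) auto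
    then have "(t, (\<lambda>_ _. 0)) \<in> I" using nonzero_ideal_restrict_T[OF I ne t, of "Sigma {..<n} (\<lambda>z. {..<m z})"] by auto
    moreover have "pl (t, (\<lambda>_ _. 0)) ((\<lambda>_ _ _. 0), s) = x"
      using t s ts by (simp add: asym_add_def sadd_zero_left sadd_zero_right bT_zero_right tadd_comm[of t] tadd_zero_left)
    ultimately show "x \<in> I" using ideal_add_closed[OF I] by metis
  qed
qed (rule ideal_subset[OF I])

lemma asym_simple: "simple_left_brace A pl asym_zero tm"
  unfolding simple_left_brace_def
  using asym_left_brace carrier_nontrivial nonzero_ideal_eq_carrier by blast

end

section \<open>A proper ideal when some \<open>f\<^sub>z - id\<close> is not bijective\<close>

context asym_product
begin

definition diff_ideal :: "nat \<Rightarrow> asym_elem set" where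
  "diff_ideal z = {x \<in> A. \<forall>j<m z. fst x z j \<in> (\<lambda>v. vsub (p z) (f z v) v) ` V z}"

context
  fixes z0 :: nat
  assumes z0: "z0 < n"
begin

lemmas diff_image_subset = Zp_isometry.diff_image_subset[OF isometry_at[OF z0]]
  and diff_image_zero = Zp_isometry.diff_image_zero[OF isometry_at[OF z0]]
  and diff_image_add = Zp_isometry.diff_image_add[OF isometry_at[OF z0]]
  and diff_image_neg = Zp_isometry.diff_image_neg[OF isometry_at[OF z0]]
  and diff_image_pow = Zp_isometry.diff_image_pow[OF isometry_at[OF z0]]
  and diff_image_pow_diff = Zp_isometry.diff_image_pow_diff[OF isometry_at[OF z0]]

lemma diff_ideal_additive_subgroup: "subgroup (diff_ideal z0) (add_grp A pl asym_zero)"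
proof (rule group.subgroupI[OF additive_group])
  show "diff_ideal z0 \<subseteq> carrier (add_grp A pl asym_zero)" by (auto simp: diff_ideal_def add_grp_def)
  have "asym_zero \<in> diff_ideal z0" using zero_in_A diff_image_zero by (simp add: diff_ideal_def asym_zero_def)
  then show "diff_ideal z0 \<noteq> {}" by blast
next
  fix x assume x: "x \<in> diff_ideal z0"
  then have xA: "x \<in> A" by (simp add: diff_ideal_def)
  have "inv\<^bsub>add_grp A pl asym_zero\<^esub> x = asym_neg x"
    using group.inv_equality[OF additive_group] asym_add_neg_left asym_neg_closed[OF xA] xA
    by (simp add: add_grp_def)
  then show "inv\<^bsub>add_grp A pl asym_zero\<^esub> x \<in> diff_ideal z0"
    using x asym_neg_closed[OF xA] z0 diff_image_neg by (auto simp: diff_ideal_def asym_neg_def tneg_apply)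
next
  fix x y assume "x \<in> diff_ideal z0" "y \<in> diff_ideal z0"
  then show "x \<otimes>\<^bsub>add_grp A pl asym_zero\<^esub> y \<in> diff_ideal z0"
    using asym_add_closed z0 diff_image_add
    by (auto simp: diff_ideal_def add_grp_def asym_add_def tadd_apply)
qed

lemma diff_ideal_lambda_closed:
  assumes "a \<in> A" "x \<in> diff_ideal z0"
  shows "brace_lambda A pl asym_zero tm a x \<in> diff_ideal z0"
proof -
  have xA: "x \<in> A" using assms(2) by (simp add: diff_ideal_def)
  have "brace_lambda A pl asym_zero tm a x \<in> A"
    using brace_lambda_eq[OF assms(1) xA] assms(1) xA
    by (simp add: A_iff alpha_closed sadd_closed sneg_closed bT_closed)
  then show ?thesis
    using brace_lambda_eq[OF assms(1) xA] assms(2) z0 diff_image_pow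
    by (auto simp: diff_ideal_def alpha_apply)
qed

text \<open>Componentwise, \<open>h' = g + \<alpha>(h) - \<alpha>'(g)\<close>, and \<open>g - \<alpha>'(g)\<close> lies in the image of \<open>f - id\<close>.\<close>

lemma diff_ideal_conj_closed:
  assumes g: "g \<in> A" and h: "h \<in> diff_ideal z0" and h': "h' \<in> A" and e: "tm h' g = tm g h"
  shows "h' \<in> diff_ideal z0"
proof -
  have hA: "h \<in> A" using h by (simp add: diff_ideal_def)
  have tg: "fst g \<in> T" and th: "fst h \<in> T" and th': "fst h' \<in> T" using g hA h' by (auto simp: A_iff)
  have P: "0 < p z0" using p_pos z0 by blast
  have "fst h' z0 j \<in> (\<lambda>v. vsub (p z0) (f z0 v) v) ` V z0" if j: "j < m z0" for j
  proof -
    let ?a = "(f z0 ^^ alpha_exp (snd h') z0 j) (fst g z0 j)"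
    let ?c = "(f z0 ^^ alpha_exp (snd g) z0 j) (fst h z0 j)"
    have v: "fst g z0 j \<in> V z0" "fst h z0 j \<in> V z0" "fst h' z0 j \<in> V z0"
      using tg th th' z0 j T_component by auto
    have va: "?a \<in> V z0" "?c \<in> V z0" using v f_pow_closed z0 by auto
    have "tadd n p (fst h') (al (snd h') (fst g)) z0 j = tadd n p (fst g) (al (snd g) (fst h)) z0 j"
      using e by (simp add: asym_mul_def)
    then have "vadd (p z0) (fst h' z0 j) ?a = vadd (p z0) (fst g z0 j) ?c"
      using z0 j by (simp add: tadd_apply alpha_apply)
    then have "fst h' z0 j = vsub (p z0) (vadd (p z0) (fst g z0 j) ?c) ?a"
      using vadd_eq_iff[OF P v(3) va(1) vadd_closed[OF P v(1) va(2)]] by blast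
    also have "\<dots> = vadd (p z0) (vsub (p z0) (fst g z0 j) ?a) ?c"
      by (intro ext) (simp add: vsub_def vadd_def mod_simps algebra_simps)
    finally show ?thesis
      using diff_image_add[OF diff_image_pow_diff[OF v(1)] diff_image_pow] h j by (simp add: diff_ideal_def)
  qed
  then show ?thesis using h' by (simp add: diff_ideal_def)
qed

lemma diff_ideal_multiplicative_subgroup: "subgroup (diff_ideal z0) (mul_grp A tm asym_zero)"
proof (rule group.subgroupI[OF multiplicative_group])
  show "diff_ideal z0 \<subseteq> carrier (mul_grp A tm asym_zero)" by (auto simp: diff_ideal_def mul_grp_def)
  have "asym_zero \<in> diff_ideal z0" using zero_in_A diff_image_zero by (simp add: diff_ideal_def asym_zero_def)
  then show "diff_ideal z0 \<noteq> {}" by blast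
next
  fix x assume x: "x \<in> diff_ideal z0"
  then have xA: "x \<in> A" by (simp add: diff_ideal_def)
  have "inv\<^bsub>mul_grp A tm asym_zero\<^esub> x = asym_inv x"
    using group.inv_equality[OF multiplicative_group] asym_mul_inv_left[OF xA] asym_inv_closed[OF xA] xA
    by (simp add: mul_grp_def)
  then show "inv\<^bsub>mul_grp A tm asym_zero\<^esub> x \<in> diff_ideal z0"
    using x asym_inv_closed[OF xA] z0 diff_image_neg diff_image_pow
    by (auto simp: diff_ideal_def asym_inv_def tneg_apply alpha_apply)
next
  fix x y assume "x \<in> diff_ideal z0" "y \<in> diff_ideal z0"
  then show "x \<otimes>\<^bsub>mul_grp A tm asym_zero\<^esub> y \<in> diff_ideal z0"
    using asym_mul_closed z0 diff_image_add diff_image_pow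
    by (auto simp: diff_ideal_def mul_grp_def asym_mul_def tadd_apply alpha_apply)
qed

lemma diff_ideal_normal: "diff_ideal z0 \<lhd> mul_grp A tm asym_zero"
proof -
  interpret M: group "mul_grp A tm asym_zero" by (rule multiplicative_group)
  show ?thesis unfolding M.normal_inv_iff
  proof (intro conjI diff_ideal_multiplicative_subgroup ballI)
    fix g h assume g: "g \<in> carrier (mul_grp A tm asym_zero)" and h: "h \<in> diff_ideal z0"
    have hc: "h \<in> carrier (mul_grp A tm asym_zero)" using h by (simp add: diff_ideal_def mul_grp_def)
    let ?h' = "g \<otimes>\<^bsub>mul_grp A tm asym_zero\<^esub> h \<otimes>\<^bsub>mul_grp A tm asym_zero\<^esub> inv\<^bsub>mul_grp A tm asym_zero\<^esub> g"
    have "?h' \<in> carrier (mul_grp A tm asym_zero)" using g hc by simp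
    moreover have "?h' \<otimes>\<^bsub>mul_grp A tm asym_zero\<^esub> g = g \<otimes>\<^bsub>mul_grp A tm asym_zero\<^esub> h"
      using g hc by (simp add: M.m_assoc)
    ultimately show "?h' \<in> diff_ideal z0"
      using diff_ideal_conj_closed[of g h ?h'] g h by (simp add: mul_grp_def)
  qed
qed

lemma diff_ideal_is_ideal: "is_ideal (diff_ideal z0)"
  unfolding brace_ideal_def brace_left_ideal_def
  using diff_ideal_additive_subgroup diff_ideal_lambda_closed diff_ideal_normal multiplicative_group
  by blast

lemma diff_ideal_nonzero: "diff_ideal z0 \<noteq> {asym_zero}"
proof -
  have "single_S 0 0 1 \<in> S" using single_S_closed[OF n_pos] r_pos p_gt_1 n_pos by simp
  then have "(\<lambda>_ _ _. 0, single_S 0 0 1) \<in> diff_ideal z0"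
    using zero_in_T diff_image_zero by (simp add: diff_ideal_def A_iff)
  moreover have "(\<lambda>_ _ _. 0, single_S 0 0 1) \<noteq> asym_zero"
    by (auto simp: asym_zero_def single_S_def fun_eq_iff)
  ultimately show ?thesis by blast
qed

lemma diff_ideal_eq_carrier_imp_surj:
  assumes "diff_ideal z0 = A" "v \<in> V z0"
  shows "v \<in> (\<lambda>v. vsub (p z0) (f z0 v) v) ` V z0"
proof -
  have m0: "0 < m z0" using m_ge r_pos z0 by (metis less_le_trans)
  have "(single_T z0 0 v, (\<lambda>_ _. 0)) \<in> diff_ideal z0"
    using single_T_closed[OF z0 m0 assms(2)] zero_in_S assms(1) by (simp add: A_iff)
  then have "single_T z0 0 v z0 0 \<in> (\<lambda>v. vsub (p z0) (f z0 v) v) ` V z0"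
    using m0 by (simp add: diff_ideal_def)
  then show ?thesis by (simp add: single_T_def)
qed

end

lemma simple_imp_diff_bij:
  assumes simple: "simple_left_brace A pl asym_zero tm" and z: "z < n"
  shows "bij_betw (\<lambda>v. vsub (p z) (f z v) v) (V z) (V z)"
proof -
  have "diff_ideal z = A"
    using simple diff_ideal_is_ideal[OF z] diff_ideal_nonzero[OF z] unfolding simple_left_brace_def by blast
  then have "(\<lambda>v. vsub (p z) (f z v) v) ` V z = V z"
    using diff_ideal_eq_carrier_imp_surj[OF z] diff_image_subset[OF z] by blast
  then show ?thesis
    using finite_Zp_space eq_card_imp_inj_on by (metis bij_betw_def)
qed

end

theorem theorem3p3:
  fixes n :: nat
    and p r m d :: "nat \<Rightarrow> nat"
    and b :: "nat \<Rightarrow> (nat \<Rightarrow> int) \<Rightarrow> (nat \<Rightarrow> int) \<Rightarrow> int"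
    and f :: "nat \<Rightarrow> (nat \<Rightarrow> int) \<Rightarrow> (nat \<Rightarrow> int)"
  assumes n_gt: "n > 1"
    and p_prime: "\<forall>z<n. prime (p z)"
    and p_distinct: "inj_on p {..<n}"
    and r_pos: "\<forall>z<n. 0 < r z"
    and m_ge: "\<forall>z<n. r z \<le> m z \<and> r (cpred n z) \<le> m z"
    and b_form: "\<forall>z<n. nonsing_sym_bilinear (p z) (Zp_space (p z) (d z)) (b z)"
    and f_orth: "\<forall>z<n. in_orth (p z) (Zp_space (p z) (d z)) (b z) (f z)"
    and f_order: "\<forall>z<n. perm_order (Zp_space (p z) (d z)) (f z) (p (cpred n z))"
  shows "simple_left_brace (asym_carrier n p d m r) (asym_add n p r m b) asym_zero (asym_mul n p r m f)
     \<longleftrightarrow> (\<forall>z<n. bij_betw (\<lambda>v. vsub (p z) (f z v) v) (Zp_space (p z) (d z)) (Zp_space (p z) (d z)))"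
proof -
  interpret asym_product n p r m d b f
    using assms by unfold_locales auto
  show ?thesis
  proof
    assume "simple_left_brace (asym_carrier n p d m r) (asym_add n p r m b) asym_zero (asym_mul n p r m f)"
    then show "\<forall>z<n. bij_betw (\<lambda>v. vsub (p z) (f z v) v) (V z) (V z)"
      using simple_imp_diff_bij by blast
  next
    assume "\<forall>z<n. bij_betw (\<lambda>v. vsub (p z) (f z v) v) (V z) (V z)"
    then interpret asym_product_diff_bij n p r m d b f
      by unfold_locales
    show "simple_left_brace (asym_carrier n p d m r) (asym_add n p r m b) asym_zero (asym_mul n p r m f)"
      by (rule asym_simple)
  qed
qed

end
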